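(* Suppose that $\mathcal X$ is a wide family of subsets of $\mathbb N$ and $\mathfrak A=(\alpha_X:X\in\mathcal X)$ is coherent. Then $\mathcal M_{\mathcal X,\mathfrak A}$ is an almost masa of $\mathcal A_0$.
   Context: Fix an orthonormal basis $(e_k)$ of $\ell_2$. For $A\subseteq\mathbb N$, $P_A$ is the projection onto $\overline{\mathrm{span}}\{e_{2k},e_{2k+1}:k\in A\}$; $H_n=\mathrm{span}\{e_{2n},e_{2n+1}\}$. $\mathcal A_0$ is the set of $T\in\mathcal B(\ell_2)$ with $\langle Te_k,e_m\rangle\ne0\Rightarrow\{k,m\}\subseteq\{2n,2n+1\}$ for some $n$, written $T=(T_n)$ with $T_n\in\mathcal B(H_n)$ the restriction; $\mathcal A_0(X)=\{T\in\mathcal A_0:T_n=0\ \forall n\notin X\}$. For $\alpha\in(71/72,1]$, $f_{\alpha,2n}=\alpha e_{2n}+\sqrt{1-\alpha^2}e_{2n+1}$, $f_{\alpha,2n+1}=\sqrt{1-\alpha^2}e_{2n}-\alpha e_{2n+1}$; $\mathcal D(X,\alpha)$ is the set of $T\in\mathcal A_0(X)$ with $T_n$ diagonal in $\{f_{\alpha,2n},f_{\alpha,2n+1}\}$ for all $n\in X$; $\mathcal D_{\mathcal K}(X,\alpha)=\{S+R:S\in\mathcal D(X,\alpha),R\in\mathcal K(\ell_2)\cap\mathcal A_0(X)\}$. $\mathcal M_{\mathcal X,\mathfrak A}=\{T\in\mathcal A_0:P_XTP_X\in\mathcal D_{\mathcal K}(X,\alpha_X)\ \forall X\in\mathcal X\}$.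 $\mathcal X$ is wide if every infinite subset of $\mathbb N$ has infinite intersection with some member of $\mathcal X$. $\mathfrak A$ is coherent if $\alpha_X\in(71/72,1]$ for all $X$ and $\alpha_X=\alpha_Y$ whenever $X\cap Y$ is infinite. $S,T$ almost commute if $ST-TS$ is compact; an almost masa of a C*-algebra $\mathcal C\subseteq\mathcal B(\ell_2)$ is a C*-subalgebra maximal under inclusion among C*-subalgebras of $\mathcal C$ whose elements pairwise almost commute. *)

theory Defs
  imports Complex_Main
begin

text \<open>The Hilbert space ell_2 is modelled as the set of square-summable complex sequences
  indexed by nat; the fixed orthonormal basis (e_k) is the standard unit vector basis.
  A bounded operator is a function on sequences that maps ell_2 linearly and boundedly
  into ell_2 and is 0 outside ell_2 (so equality of operators is equality on ell_2).\<close>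

definition ell2 :: "(nat \<Rightarrow> complex) set" where
  "ell2 = {x. summable (\<lambda>k. (cmod (x k))\<^sup>2)}"

definition l2norm :: "(nat \<Rightarrow> complex) \<Rightarrow> real" where
  "l2norm x = sqrt (\<Sum>k. (cmod (x k))\<^sup>2)"

definition l2inner :: "(nat \<Rightarrow> complex) \<Rightarrow> (nat \<Rightarrow> complex) \<Rightarrow> complex" where
  "l2inner x y = (\<Sum>k. x k * cnj (y k))"

definition vadd :: "(nat \<Rightarrow> complex) \<Rightarrow> (nat \<Rightarrow> complex) \<Rightarrow> (nat \<Rightarrow> complex)" where
  "vadd x y = (\<lambda>j. x j + y j)"

definition vsub :: "(nat \<Rightarrow> complex) \<Rightarrow> (nat \<Rightarrow> complex) \<Rightarrow> (nat \<Rightarrow> complex)" where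
  "vsub x y = (\<lambda>j. x j - y j)"

definition vscale :: "complex \<Rightarrow> (nat \<Rightarrow> complex) \<Rightarrow> (nat \<Rightarrow> complex)" where
  "vscale c x = (\<lambda>j. c * x j)"

definition basis_vec :: "nat \<Rightarrow> (nat \<Rightarrow> complex)" where
  "basis_vec k = (\<lambda>j. if j = k then 1 else 0)"

type_synonym op = "(nat \<Rightarrow> complex) \<Rightarrow> (nat \<Rightarrow> complex)"

definition bounded_op :: "op \<Rightarrow> bool" where
  "bounded_op T \<longleftrightarrow>
     (\<forall>x\<in>ell2. T x \<in> ell2) \<and>
     (\<forall>x\<in>ell2. \<forall>y\<in>ell2. T (vadd x y) = vadd (T x) (T y)) \<and>
     (\<forall>x\<in>ell2. \<forall>c. T (vscale c x) = vscale c (T x)) \<and>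
     (\<exists>C. \<forall>x\<in>ell2. l2norm (T x) \<le> C * l2norm x) \<and>
     (\<forall>x. x \<notin> ell2 \<longrightarrow> T x = (\<lambda>j. 0))"

definition Bop :: "op set" where
  "Bop = {T. bounded_op T}"

definition opnorm :: "op \<Rightarrow> real" where
  "opnorm T = Sup {l2norm (T x) | x. x \<in> ell2 \<and> l2norm x \<le> 1}"

definition op_add :: "op \<Rightarrow> op \<Rightarrow> op" where
  "op_add S T = (\<lambda>x. vadd (S x) (T x))"

definition op_sub :: "op \<Rightarrow> op \<Rightarrow> op" where
  "op_sub S T = (\<lambda>x. vsub (S x) (T x))"

definition op_scale :: "complex \<Rightarrow> op \<Rightarrow> op" where
  "op_scale c T = (\<lambda>x. vscale c (T x))"

definition op_mult :: "op \<Rightarrow> op \<Rightarrow> op" where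
  "op_mult S T = (\<lambda>x. S (T x))"

definition is_adjoint :: "op \<Rightarrow> op \<Rightarrow> bool" where
  "is_adjoint T S \<longleftrightarrow> S \<in> Bop \<and>
     (\<forall>x\<in>ell2. \<forall>y\<in>ell2. l2inner (T x) y = l2inner x (S y))"

definition compact_op :: "op \<Rightarrow> bool" where
  "compact_op T \<longleftrightarrow> T \<in> Bop \<and>
     (\<forall>x :: nat \<Rightarrow> (nat \<Rightarrow> complex). (\<forall>n. x n \<in> ell2) \<and> (\<exists>B. \<forall>n. l2norm (x n) \<le> B) \<longrightarrow>
        (\<exists>r y. strict_mono r \<and> y \<in> ell2 \<and>
               (\<lambda>n. l2norm (vsub (T (x (r n))) y)) \<longlonglongrightarrow> 0))"

definition cstar_subalg :: "op set \<Rightarrow> bool" where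
  "cstar_subalg C \<longleftrightarrow> C \<subseteq> Bop \<and> (\<lambda>x. \<lambda>j. 0) \<in> C \<and>
     (\<forall>S\<in>C. \<forall>T\<in>C. op_add S T \<in> C) \<and>
     (\<forall>c. \<forall>T\<in>C. op_scale c T \<in> C) \<and>
     (\<forall>S\<in>C. \<forall>T\<in>C. op_mult S T \<in> C) \<and>
     (\<forall>T\<in>C. \<exists>S\<in>C. is_adjoint T S) \<and>
     (\<forall>Tn S. (\<forall>n. Tn n \<in> C) \<and> S \<in> Bop \<and> (\<lambda>n. opnorm (op_sub (Tn n) S)) \<longlonglongrightarrow> 0 \<longrightarrow> S \<in> C)"

definition almost_commute :: "op \<Rightarrow> op \<Rightarrow> bool" where
  "almost_commute S T \<longleftrightarrow> compact_op (op_sub (op_mult S T) (op_mult T S))"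

definition almost_masa :: "op set \<Rightarrow> op set \<Rightarrow> bool" where
  "almost_masa \<C> M \<longleftrightarrow>
     cstar_subalg M \<and> M \<subseteq> \<C> \<and> (\<forall>S\<in>M. \<forall>T\<in>M. almost_commute S T) \<and>
     (\<forall>N. cstar_subalg N \<and> N \<subseteq> \<C> \<and> (\<forall>S\<in>N. \<forall>T\<in>N. almost_commute S T) \<and> M \<subseteq> N
          \<longrightarrow> N = M)"

definition A0 :: "op set" where
  "A0 = {T \<in> Bop. \<forall>k m. l2inner (T (basis_vec k)) (basis_vec m) \<noteq> 0 \<longrightarrow>
                     (\<exists>n. {k, m} \<subseteq> {2*n, 2*n+1})}"

definition Hblock :: "nat \<Rightarrow> (nat \<Rightarrow> complex) set" where
  "Hblock n = {x. \<forall>j. j \<noteq> 2*n \<and> j \<noteq> 2*n+1 \<longrightarrow> x j = 0}"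

definition proj :: "nat set \<Rightarrow> op" where
  "proj A = (\<lambda>x. if x \<in> ell2 then (\<lambda>j. if j div 2 \<in> A then x j else 0) else (\<lambda>j. 0))"

definition A0_on :: "nat set \<Rightarrow> op set" where
  "A0_on X = {T \<in> A0. \<forall>n. n \<notin> X \<longrightarrow> (\<forall>x\<in>Hblock n. T x = (\<lambda>j. 0))}"

definition fvec0 :: "real \<Rightarrow> nat \<Rightarrow> (nat \<Rightarrow> complex)" where
  "fvec0 \<alpha> n = vadd (vscale (complex_of_real \<alpha>) (basis_vec (2*n)))
                    (vscale (complex_of_real (sqrt (1 - \<alpha>\<^sup>2))) (basis_vec (2*n+1)))"

definition fvec1 :: "real \<Rightarrow> nat \<Rightarrow> (nat \<Rightarrow> complex)" where
  "fvec1 \<alpha> n = vsub (vscale (complex_of_real (sqrt (1 - \<alpha>\<^sup>2))) (basis_vec (2*n)))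
                    (vscale (complex_of_real \<alpha>) (basis_vec (2*n+1)))"

definition Dset :: "nat set \<Rightarrow> real \<Rightarrow> op set" where
  "Dset X \<alpha> = {T \<in> A0_on X. \<forall>n\<in>X. (\<exists>c. T (fvec0 \<alpha> n) = vscale c (fvec0 \<alpha> n)) \<and>
                                     (\<exists>\<mu>. T (fvec1 \<alpha> n) = vscale \<mu> (fvec1 \<alpha> n))}"

definition DKset :: "nat set \<Rightarrow> real \<Rightarrow> op set" where
  "DKset X \<alpha> = {op_add S R | S R. S \<in> Dset X \<alpha> \<and> compact_op R \<and> R \<in> A0_on X}"

definition Mset :: "nat set set \<Rightarrow> (nat set \<Rightarrow> real) \<Rightarrow> op set" where
  "Mset \<X> \<alpha> = {T \<in> A0. \<forall>X\<in>\<X>. op_mult (proj X) (op_mult T (proj X)) \<in> DKset X (\<alpha> X)}"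

definition wide :: "nat set set \<Rightarrow> bool" where
  "wide \<X> \<longleftrightarrow> (\<forall>A. infinite A \<longrightarrow> (\<exists>X\<in>\<X>. infinite (A \<inter> X)))"

definition coherent :: "nat set set \<Rightarrow> (nat set \<Rightarrow> real) \<Rightarrow> bool" where
  "coherent \<X> \<alpha> \<longleftrightarrow> (\<forall>X\<in>\<X>. 71/72 < \<alpha> X \<and> \<alpha> X \<le> 1) \<and>
     (\<forall>X\<in>\<X>. \<forall>Y\<in>\<X>. infinite (X \<inter> Y) \<longrightarrow> \<alpha> X = \<alpha> Y)"

end

theory Submission
  imports Defs "HOL-Analysis.Analysis" "HOL-Library.Diagonal_Subsequence"
begin

text \<open>Every operator in \<open>\<A>\<^sub>0\<close> is a bounded sequence of \<open>2 \<times> 2\<close> matrices \<open>T\<^sub>n\<close>, and it is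
  compact iff \<open>T\<^sub>n \<longrightarrow> 0\<close>. Written in the rotated basis \<open>f\<^sub>\<alpha>\<^sub>,\<^sub>2\<^sub>n, f\<^sub>\<alpha>\<^sub>,\<^sub>2\<^sub>n\<^sub>+\<^sub>1\<close>, the
  condition \<open>P\<^sub>X T P\<^sub>X \<in> \<D>\<^sub>\<K>(X, \<alpha>)\<close> says exactly that the off-diagonal coefficients of \<open>T\<^sub>n\<close>
  tend to \<open>0\<close> as \<open>n \<rightarrow> \<infinity>\<close> within \<open>X\<close>; in this form it is clearly preserved by the
  C*-algebra operations and by norm limits. For \<open>S, T\<close> in \<open>\<M>\<close> the commutator of \<open>S\<^sub>n\<close> and
  \<open>T\<^sub>n\<close> then tends to \<open>0\<close> within every \<open>X \<in> \<X>\<close>, because diagonal matrices commute, and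
  wideness turns this into \<open>[S\<^sub>n, T\<^sub>n] \<longrightarrow> 0\<close>, i.e. compactness of \<open>ST - TS\<close>. For maximality,
  coherence puts the projection \<open>Q\<^sub>X\<close> onto the span of the \<open>f\<^sub>\<alpha>\<^sub>,\<^sub>2\<^sub>n\<close>, \<open>n \<in> X\<close>, into
  \<open>\<M>\<close>; the off-diagonal coefficients of \<open>[T, Q\<^sub>X]\<close> within \<open>X\<close> are those of \<open>T\<close> up to
  sign, so anything almost commuting with \<open>\<M>\<close> lies in \<open>\<M>\<close>.\<close>

section \<open>Sequences tending to zero\<close>

lemma tendsto_0_along_iff:
  fixes f :: "nat \<Rightarrow> 'a::real_normed_vector"
  shows "((\<lambda>n. if n \<in> X then f n else 0) \<longlonglongrightarrow> 0) \<longleftrightarrow> (f \<longlongrightarrow> 0) (inf sequentially (principal X))"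
  unfolding tendsto_iff eventually_inf_principal
proof (intro iffI allI impI)
  fix e :: real assume e: "0 < e"
  assume "\<forall>e>0. \<forall>\<^sub>F n in sequentially. dist (if n \<in> X then f n else 0) 0 < e"
  then have "\<forall>\<^sub>F n in sequentially. dist (if n \<in> X then f n else 0) 0 < e" using e by blast
  then show "\<forall>\<^sub>F n in sequentially. n \<in> X \<longrightarrow> dist (f n) 0 < e"
    by (rule eventually_mono) (simp split: if_splits)
next
  fix e :: real assume e: "0 < e"
  assume "\<forall>e>0. \<forall>\<^sub>F n in sequentially. n \<in> X \<longrightarrow> dist (f n) 0 < e"
  then have "\<forall>\<^sub>F n in sequentially. n \<in> X \<longrightarrow> dist (f n) 0 < e" using e by blast
  then show "\<forall>\<^sub>F n in sequentially. dist (if n \<in> X then f n else 0) 0 < e"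
    by (rule eventually_mono) (simp add: e)
qed

lemma eventually_sequentially_iff_finite: "eventually P sequentially \<longleftrightarrow> finite {n::nat. \<not> P n}"
  by (simp only: cofinite_eq_sequentially[symmetric] eventually_cofinite)

lemma wide_tendsto_0:
  fixes f :: "nat \<Rightarrow> 'a::real_normed_vector"
  assumes wide: "wide \<X>" and along: "\<And>X. X \<in> \<X> \<Longrightarrow> (f \<longlongrightarrow> 0) (inf sequentially (principal X))"
  shows "f \<longlonglongrightarrow> 0"
proof (rule tendstoI, rule ccontr)
  fix \<epsilon> :: real assume \<epsilon>: "0 < \<epsilon>" and "\<not> (\<forall>\<^sub>F n in sequentially. dist (f n) 0 < \<epsilon>)"
  then have "infinite {n. \<not> dist (f n) 0 < \<epsilon>}"
    by (simp add: eventually_sequentially_iff_finite)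
  then obtain X where X: "X \<in> \<X>" and inf: "infinite ({n. \<not> dist (f n) 0 < \<epsilon>} \<inter> X)"
    using wide unfolding wide_def by blast
  have "\<forall>\<^sub>F n in sequentially. n \<in> X \<longrightarrow> dist (f n) 0 < \<epsilon>"
    using tendstoD[OF along[OF X] \<epsilon>] by (simp add: eventually_inf_principal)
  then have "finite {n. \<not> (n \<in> X \<longrightarrow> dist (f n) 0 < \<epsilon>)}"
    by (simp only: eventually_sequentially_iff_finite)
  moreover have "{n. \<not> (n \<in> X \<longrightarrow> dist (f n) 0 < \<epsilon>)} = {n. \<not> dist (f n) 0 < \<epsilon>} \<inter> X" by auto
  ultimately show False using inf by simp
qed

lemma tendsto_0_mult_bounded:
  fixes f g :: "'a \<Rightarrow> 'b::real_normed_algebra"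
  assumes f: "(f \<longlongrightarrow> 0) F" and g: "\<And>x. norm (g x) \<le> K"
  shows "((\<lambda>x. g x * f x) \<longlongrightarrow> 0) F" and "((\<lambda>x. f x * g x) \<longlongrightarrow> 0) F"
proof -
  have gf: "norm (g x * f x) \<le> norm (f x) * K" and fg: "norm (f x * g x) \<le> norm (f x) * K" for x
    using mult_right_mono[OF g[of x] norm_ge_zero[of "f x"]] mult.commute[of K "norm (f x)"]
      norm_mult_ineq[of "g x" "f x"] norm_mult_ineq[of "f x" "g x"] mult.commute[of "norm (f x)" "norm (g x)"]
    by linarith+
  show "((\<lambda>x. g x * f x) \<longlongrightarrow> 0) F" by (rule tendsto_0_le[where K=K, OF f always_eventually]) (simp add: gf)
  show "((\<lambda>x. f x * g x) \<longlongrightarrow> 0) F" by (rule tendsto_0_le[where K=K, OF f always_eventually]) (simp add: fg)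
qed

lemma tendsto_0_uniform_approx:
  fixes g :: "'a \<Rightarrow> 'b::real_normed_vector"
  assumes f: "\<And>p. (f p \<longlongrightarrow> 0) F" and B: "B \<longlonglongrightarrow> 0" and approx: "\<And>p x. norm (g x - f p x) \<le> B p"
  shows "(g \<longlongrightarrow> 0) F"
proof (rule tendstoI)
  fix \<epsilon> :: real assume \<epsilon>: "0 < \<epsilon>"
  then obtain p where p: "B p < \<epsilon> / 2"
    using order_tendstoD(2)[OF B, of "\<epsilon> / 2"] by (auto dest: eventually_happens)
  have "\<forall>\<^sub>F x in F. dist (f p x) 0 < \<epsilon> / 2" by (rule tendstoD[OF f]) (use \<epsilon> in simp)
  then show "\<forall>\<^sub>F x in F. dist (g x) 0 < \<epsilon>"
  proof (rule eventually_mono)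
    fix x assume "dist (f p x) 0 < \<epsilon> / 2"
    then show "dist (g x) 0 < \<epsilon>"
      using norm_triangle_sub[of "g x" "f p x"] approx[of x p] p by simp
  qed
qed

section \<open>Square-summable sequences\<close>

lemma l2norm_power2: "x \<in> ell2 \<Longrightarrow> (l2norm x)\<^sup>2 = (\<Sum>k. (cmod (x k))\<^sup>2)"
  unfolding l2norm_def by (simp add: ell2_def suminf_nonneg)

lemma l2norm_nonneg: "x \<in> ell2 \<Longrightarrow> 0 \<le> l2norm x"
  unfolding l2norm_def by (simp add: ell2_def suminf_nonneg)

lemma sum_le_l2norm_power2: "finite I \<Longrightarrow> x \<in> ell2 \<Longrightarrow> (\<Sum>k\<in>I. (cmod (x k))\<^sup>2) \<le> (l2norm x)\<^sup>2"
  by (simp add: l2norm_power2 sum_le_suminf ell2_def)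

lemma norm_le_l2norm: "x \<in> ell2 \<Longrightarrow> cmod (x j) \<le> l2norm x"
proof -
  assume x: "x \<in> ell2"
  have "(cmod (x j))\<^sup>2 \<le> (l2norm x)\<^sup>2" using sum_le_l2norm_power2[of "{j}" x] x by simp
  then show ?thesis using l2norm_nonneg[OF x] by (simp add: power2_le_iff_abs_le)
qed

lemma ell2_bounded_partial_sums:
  assumes "\<And>N. (\<Sum>k<N. (cmod (x k))\<^sup>2) \<le> B"
  shows "x \<in> ell2" and "l2norm x \<le> sqrt B"
proof -
  have s: "summable (\<lambda>k. (cmod (x k))\<^sup>2)"
    by (rule summableI_nonneg_bounded[where x=B]) (use assms in auto)
  then show "x \<in> ell2" by (simp add: ell2_def)
  have "(\<Sum>k. (cmod (x k))\<^sup>2) \<le> B" by (rule suminf_le_const[OF s assms])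
  then show "l2norm x \<le> sqrt B" unfolding l2norm_def by simp
qed

lemma ell2_finite_support: "(\<And>j. N \<le> j \<Longrightarrow> x j = 0) \<Longrightarrow> x \<in> ell2"
  unfolding ell2_def mem_Collect_eq by (rule summable_finite[of "{..<N}"]) auto

lemma ell2_zero [simp]: "(\<lambda>j. 0) \<in> ell2"
  by (rule ell2_finite_support[of 0]) auto

lemma basis_vec_ell2 [simp]: "basis_vec k \<in> ell2"
  by (rule ell2_finite_support[of "Suc k"]) (auto simp: basis_vec_def)

lemma l2norm_basis_vec [simp]: "l2norm (basis_vec k) = 1"
proof -
  have "(\<lambda>j. (cmod (basis_vec k j))\<^sup>2) = (\<lambda>j. if j = k then 1 else 0)"
    by (auto simp: basis_vec_def)
  then show ?thesis
    unfolding l2norm_def using sums_single[of k "\<lambda>_. 1::real"] by (simp add: sums_iff)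
qed

lemma l2inner_basis_vec [simp]: "l2inner v (basis_vec m) = v m"
proof -
  have "(\<lambda>k. v k * cnj (basis_vec m k)) = (\<lambda>k. if k = m then v k else 0)"
    by (auto simp: basis_vec_def)
  then show ?thesis unfolding l2inner_def using sums_single[of m v] by (simp add: sums_iff)
qed

lemma norm_add_power2_le: "(cmod (a + b))\<^sup>2 \<le> 2 * (cmod a)\<^sup>2 + 2 * (cmod b)\<^sup>2"
proof -
  have "(cmod (a + b))\<^sup>2 \<le> (cmod a + cmod b)\<^sup>2"
    by (simp add: power_mono norm_triangle_ineq)
  also have "\<dots> \<le> 2 * (cmod a)\<^sup>2 + 2 * (cmod b)\<^sup>2"
    using zero_le_power2[of "cmod a - cmod b"] by (simp add: power2_eq_square algebra_simps)
  finally show ?thesis .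
qed

lemma norm_diff_power2_le: "(cmod (a - b))\<^sup>2 \<le> 2 * (cmod a)\<^sup>2 + 2 * (cmod b)\<^sup>2"
  using norm_add_power2_le[of a "-b"] by simp

lemma ell2_vadd: "x \<in> ell2 \<Longrightarrow> y \<in> ell2 \<Longrightarrow> vadd x y \<in> ell2"
  unfolding ell2_def vadd_def mem_Collect_eq
  by (rule summable_comparison_test'[where g="\<lambda>k. 2 * (cmod (x k))\<^sup>2 + 2 * (cmod (y k))\<^sup>2" and N=0])
    (auto intro!: summable_add summable_mult simp: norm_add_power2_le)

lemma ell2_vsub: "x \<in> ell2 \<Longrightarrow> y \<in> ell2 \<Longrightarrow> vsub x y \<in> ell2"
  unfolding ell2_def vsub_def mem_Collect_eq
  by (rule summable_comparison_test'[where g="\<lambda>k. 2 * (cmod (x k))\<^sup>2 + 2 * (cmod (y k))\<^sup>2" and N=0])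
    (auto intro!: summable_add summable_mult simp: norm_diff_power2_le)

lemma ell2_vscale: "x \<in> ell2 \<Longrightarrow> vscale c x \<in> ell2"
  unfolding ell2_def vscale_def
  by (auto simp: norm_mult power_mult_distrib intro!: summable_mult)

lemma l2norm_vsub_power2_le:
  assumes x: "x \<in> ell2" and y: "y \<in> ell2"
  shows "(l2norm (vsub x y))\<^sup>2 \<le> 2 * (l2norm x)\<^sup>2 + 2 * (l2norm y)\<^sup>2"
proof -
  have "(l2norm (vsub x y))\<^sup>2 = (\<Sum>k. (cmod (x k - y k))\<^sup>2)"
    using l2norm_power2[OF ell2_vsub[OF x y]] by (simp add: vsub_def)
  also have "\<dots> \<le> (\<Sum>k. 2 * (cmod (x k))\<^sup>2 + 2 * (cmod (y k))\<^sup>2)"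
    using ell2_vsub[OF x y] x y
    by (intro suminf_le) (auto simp: norm_diff_power2_le ell2_def vsub_def intro!: summable_add summable_mult)
  also have "\<dots> = 2 * (l2norm x)\<^sup>2 + 2 * (l2norm y)\<^sup>2"
    using x y by (simp add: l2norm_power2 suminf_add[symmetric] suminf_mult ell2_def summable_mult)
  finally show ?thesis .
qed

lemma l2norm_vsub_le:
  assumes x: "x \<in> ell2" and y: "y \<in> ell2" and "l2norm x \<le> C" "l2norm y \<le> C"
  shows "l2norm (vsub x y) \<le> 2 * C"
proof (rule power2_le_imp_le)
  have "(l2norm x)\<^sup>2 \<le> C\<^sup>2" "(l2norm y)\<^sup>2 \<le> C\<^sup>2"
    using assms(3,4) l2norm_nonneg[OF x] l2norm_nonneg[OF y] by (auto intro: power_mono)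
  moreover have "(2 * C)\<^sup>2 = 4 * C\<^sup>2" by (simp add: power2_eq_square)
  ultimately show "(l2norm (vsub x y))\<^sup>2 \<le> (2 * C)\<^sup>2"
    using l2norm_vsub_power2_le[OF x y] by linarith
  show "0 \<le> 2 * C" using order_trans[OF l2norm_nonneg[OF x] assms(3)] by simp
qed

lemma coordinatewise_limit_ell2:
  assumes x: "\<And>k. x k \<in> ell2" "\<And>k. l2norm (x k) \<le> C" and z: "\<And>j. (\<lambda>k. x k j) \<longlonglongrightarrow> z j"
  shows "z \<in> ell2" and "l2norm z \<le> C"
proof -
  have "(\<Sum>j<N. (cmod (z j))\<^sup>2) \<le> C\<^sup>2" for N
  proof (rule LIMSEQ_le_const2)
    show "(\<lambda>k. \<Sum>j<N. (cmod (x k j))\<^sup>2) \<longlonglongrightarrow> (\<Sum>j<N. (cmod (z j))\<^sup>2)"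
      by (intro tendsto_intros z)
    have "(\<Sum>j<N. (cmod (x k j))\<^sup>2) \<le> C\<^sup>2" for k
      using sum_le_l2norm_power2[OF _ x(1), of "{..<N}" k] power_mono[OF x(2) l2norm_nonneg[OF x(1)], of k 2]
      by simp
    then show "\<exists>N'. \<forall>k\<ge>N'. (\<Sum>j<N. (cmod (x k j))\<^sup>2) \<le> C\<^sup>2" by blast
  qed
  note bound = this
  show "z \<in> ell2" by (rule ell2_bounded_partial_sums(1)[OF bound])
  show "l2norm z \<le> C"
    using ell2_bounded_partial_sums(2)[OF bound] order_trans[OF l2norm_nonneg[OF x(1)] x(2)] by simp
qed

lemma l2norm_tail_tendsto_0:
  assumes x: "x \<in> ell2"
  shows "(\<lambda>N. l2norm (\<lambda>k. if k < N then 0 else x k)) \<longlonglongrightarrow> 0"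
proof -
  let ?f = "\<lambda>k. (cmod (x k))\<^sup>2"
  have s: "summable ?f" using x by (simp add: ell2_def)
  have eq: "l2norm (\<lambda>k. if k < N then 0 else x k) = sqrt (suminf ?f - (\<Sum>k<N. ?f k))" for N
  proof -
    have "(\<lambda>k. ?f k - (if k \<in> {..<N} then ?f k else 0)) sums (suminf ?f - (\<Sum>k\<in>{..<N}. ?f k))"
      by (rule sums_diff[OF summable_sums[OF s] sums_If_finite_set]) simp
    moreover have "(\<lambda>k. ?f k - (if k \<in> {..<N} then ?f k else 0)) = (\<lambda>k. (cmod (if k < N then 0 else x k))\<^sup>2)"
      by auto
    ultimately show ?thesis unfolding l2norm_def by (simp add: sums_iff)
  qed
  have "(\<lambda>N. sqrt (suminf ?f - (\<Sum>k<N. ?f k))) \<longlonglongrightarrow> sqrt (suminf ?f - suminf ?f)"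
    by (intro tendsto_intros summable_LIMSEQ s)
  then show ?thesis unfolding eq by simp
qed

lemma l2inner_sums_pairs:
  assumes u: "u \<in> ell2" and w: "w \<in> ell2"
  shows "(\<lambda>n. u (2*n) * cnj (w (2*n)) + u (2*n+1) * cnj (w (2*n+1))) sums l2inner u w"
proof -
  let ?f = "\<lambda>j. u j * cnj (w j)"
  have bound: "norm (?f j) \<le> (cmod (u j))\<^sup>2 + (cmod (w j))\<^sup>2" for j
  proof -
    have "2 * (cmod (u j) * cmod (w j)) \<le> (cmod (u j))\<^sup>2 + (cmod (w j))\<^sup>2"
      using zero_le_power2[of "cmod (u j) - cmod (w j)"] by (simp add: power2_eq_square algebra_simps)
    moreover have "norm (?f j) = cmod (u j) * cmod (w j)" by (simp add: norm_mult)
    moreover have "0 \<le> cmod (u j) * cmod (w j)" by simp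
    ultimately show ?thesis by linarith
  qed
  have "summable (\<lambda>j. (cmod (u j))\<^sup>2 + (cmod (w j))\<^sup>2)"
    using u w unfolding ell2_def by (intro summable_add) auto
  then have "summable (\<lambda>j. norm (?f j))"
    by (rule summable_comparison_test'[where N=0]) (simp add: bound)
  then have "summable ?f" by (rule summable_norm_cancel)
  then have "(\<lambda>n. sum ?f {n * 2..<n * 2 + 2}) sums l2inner u w"
    unfolding l2inner_def by (intro sums_group summable_sums) auto
  moreover have "sum ?f {n * 2..<n * 2 + 2} = ?f (2*n) + ?f (2*n+1)" for n
    by (simp add: numeral_2_eq_2 atLeastLessThanSuc mult.commute)
  ultimately show ?thesis by simp
qed

section \<open>Bounded operators and their matrix entries\<close>

lemma Bop_ell2: "T \<in> Bop \<Longrightarrow> x \<in> ell2 \<Longrightarrow> T x \<in> ell2"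
  by (simp add: Bop_def bounded_op_def)

lemma Bop_vadd: "T \<in> Bop \<Longrightarrow> x \<in> ell2 \<Longrightarrow> y \<in> ell2 \<Longrightarrow> T (vadd x y) = vadd (T x) (T y)"
  by (simp add: Bop_def bounded_op_def)

lemma Bop_vscale: "T \<in> Bop \<Longrightarrow> x \<in> ell2 \<Longrightarrow> T (vscale c x) = vscale c (T x)"
  by (simp add: Bop_def bounded_op_def)

lemma Bop_outside: "T \<in> Bop \<Longrightarrow> x \<notin> ell2 \<Longrightarrow> T x = (\<lambda>j. 0)"
  by (simp add: Bop_def bounded_op_def)

lemma Bop_zero: "T \<in> Bop \<Longrightarrow> T (\<lambda>j. 0) = (\<lambda>j. 0)"
  using Bop_vscale[of T "\<lambda>j. 0" 0] by (simp add: vscale_def)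

lemma Bop_bound:
  assumes "T \<in> Bop"
  obtains C where "0 \<le> C" "\<And>x. x \<in> ell2 \<Longrightarrow> l2norm (T x) \<le> C * l2norm x"
proof -
  obtain C where C: "\<forall>x\<in>ell2. l2norm (T x) \<le> C * l2norm x"
    using assms by (auto simp: Bop_def bounded_op_def)
  have "l2norm (T x) \<le> max C 0 * l2norm x" if "x \<in> ell2" for x
    using C that mult_right_mono[OF max.cobounded1 l2norm_nonneg[OF that], of C 0] by force
  then show ?thesis using that[of "max C 0"] by simp
qed

definition entry :: "op \<Rightarrow> nat \<Rightarrow> nat \<Rightarrow> complex" where
  "entry T j i = T (basis_vec i) j"

lemma entry_op_add: "entry (op_add T S) j i = entry T j i + entry S j i"
  by (simp add: entry_def op_add_def vadd_def)

lemma entry_op_sub: "entry (op_sub T S) j i = entry T j i - entry S j i"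
  by (simp add: entry_def op_sub_def vsub_def)

lemma entry_op_scale: "entry (op_scale c T) j i = c * entry T j i"
  by (simp add: entry_def op_scale_def vscale_def)

lemma norm_entry_le_opnorm:
  assumes "T \<in> Bop"
  shows "cmod (entry T j i) \<le> opnorm T"
proof -
  obtain C where C0: "0 \<le> C" and C: "\<And>x. x \<in> ell2 \<Longrightarrow> l2norm (T x) \<le> C * l2norm x"
    using Bop_bound[OF assms] by blast
  have "cmod (entry T j i) \<le> l2norm (T (basis_vec i))"
    unfolding entry_def by (rule norm_le_l2norm[OF Bop_ell2[OF assms basis_vec_ell2]])
  also have "\<dots> \<le> opnorm T" unfolding opnorm_def
  proof (rule cSup_upper)
    show "l2norm (T (basis_vec i)) \<in> {l2norm (T x) |x. x \<in> ell2 \<and> l2norm x \<le> 1}"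
      by (intro CollectI exI[of _ "basis_vec i"]) simp
    have "l2norm (T x) \<le> C" if "x \<in> ell2" "l2norm x \<le> 1" for x
      using C[OF that(1)] mult_left_mono[OF that(2) C0] by simp
    then show "bdd_above {l2norm (T x) |x. x \<in> ell2 \<and> l2norm x \<le> 1}"
      by (intro bdd_aboveI[where M=C]) blast
  qed
  finally show ?thesis .
qed

lemma Bop_op_sub:
  assumes T: "T \<in> Bop" and S: "S \<in> Bop"
  shows "op_sub T S \<in> Bop"
proof -
  obtain C1 where "0 \<le> C1" and C1: "\<And>x. x \<in> ell2 \<Longrightarrow> l2norm (T x) \<le> C1 * l2norm x"
    using Bop_bound[OF T] by blast
  obtain C2 where "0 \<le> C2" and C2: "\<And>x. x \<in> ell2 \<Longrightarrow> l2norm (S x) \<le> C2 * l2norm x"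
    using Bop_bound[OF S] by blast
  have "l2norm (op_sub T S x) \<le> (2 * (C1 + C2)) * l2norm x" if x: "x \<in> ell2" for x
  proof (rule power2_le_imp_le)
    have "(l2norm (op_sub T S x))\<^sup>2 \<le> 2 * (l2norm (T x))\<^sup>2 + 2 * (l2norm (S x))\<^sup>2"
      unfolding op_sub_def by (rule l2norm_vsub_power2_le[OF Bop_ell2[OF T x] Bop_ell2[OF S x]])
    also have "\<dots> \<le> 2 * (C1 * l2norm x)\<^sup>2 + 2 * (C2 * l2norm x)\<^sup>2"
      using C1[OF x] C2[OF x] l2norm_nonneg[OF Bop_ell2[OF T x]] l2norm_nonneg[OF Bop_ell2[OF S x]]
      by (intro add_mono mult_left_mono power_mono) auto
    also have "\<dots> \<le> (2 * (C1 + C2) * l2norm x)\<^sup>2"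
      using \<open>0 \<le> C1\<close> \<open>0 \<le> C2\<close> l2norm_nonneg[OF x]
      by (simp add: power2_eq_square algebra_simps)
    finally show "(l2norm (op_sub T S x))\<^sup>2 \<le> (2 * (C1 + C2) * l2norm x)\<^sup>2" .
    show "0 \<le> 2 * (C1 + C2) * l2norm x"
      using \<open>0 \<le> C1\<close> \<open>0 \<le> C2\<close> l2norm_nonneg[OF x] by simp
  qed
  moreover have "op_sub T S x \<in> ell2" if "x \<in> ell2" for x
    unfolding op_sub_def by (rule ell2_vsub[OF Bop_ell2[OF T that] Bop_ell2[OF S that]])
  moreover have "op_sub T S (vadd x y) = vadd (op_sub T S x) (op_sub T S y)"
    if "x \<in> ell2" "y \<in> ell2" for x y
    using that by (simp add: op_sub_def Bop_vadd[OF T] Bop_vadd[OF S]) (simp add: vsub_def vadd_def algebra_simps)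
  moreover have "op_sub T S (vscale c x) = vscale c (op_sub T S x)" if "x \<in> ell2" for x c
    using that by (simp add: op_sub_def Bop_vscale[OF T] Bop_vscale[OF S]) (simp add: vsub_def vscale_def algebra_simps)
  moreover have "op_sub T S x = (\<lambda>j. 0)" if "x \<notin> ell2" for x
    using that by (simp add: op_sub_def Bop_outside[OF T] Bop_outside[OF S] vsub_def)
  ultimately show ?thesis unfolding Bop_def bounded_op_def by blast
qed

lemma norm_entry_diff_le_opnorm:
  "T \<in> Bop \<Longrightarrow> S \<in> Bop \<Longrightarrow> cmod (entry T j i - entry S j i) \<le> opnorm (op_sub T S)"
  using norm_entry_le_opnorm[OF Bop_op_sub] by (simp add: entry_op_sub)

lemma Bop_entries_bounded:
  assumes "T \<in> Bop"
  obtains K where "\<And>j i. cmod (entry T j i) \<le> K"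
proof -
  obtain C where "0 \<le> C" and C: "\<And>x. x \<in> ell2 \<Longrightarrow> l2norm (T x) \<le> C * l2norm x"
    using Bop_bound[OF assms] by blast
  have "cmod (entry T j i) \<le> C" for j i
    using norm_le_l2norm[OF Bop_ell2[OF assms basis_vec_ell2], of i j] C[OF basis_vec_ell2, of i]
    by (simp add: entry_def)
  then show ?thesis using that by blast
qed

lemma Bop_apply_sums:
  assumes T: "T \<in> Bop" and x: "x \<in> ell2"
  shows "(\<lambda>i. x i * entry T j i) sums T x j"
proof -
  obtain C where C: "\<And>y. y \<in> ell2 \<Longrightarrow> l2norm (T y) \<le> C * l2norm y"
    using Bop_bound[OF T] by blast
  define head where "head N = (\<lambda>k. if k < N then x k else 0)" for N
  define tail where "tail N = (\<lambda>k. if k < N then 0 else x k)" for N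
  have head: "head N \<in> ell2" for N by (rule ell2_finite_support[of N]) (simp add: head_def)
  have "tail N = vsub x (head N)" for N by (auto simp: tail_def head_def vsub_def)
  then have tail: "tail N \<in> ell2" for N using ell2_vsub[OF x head] by simp
  have T_head: "T (head N) j = (\<Sum>i<N. x i * entry T j i)" for N
  proof (induction N)
    case 0
    then show ?case using Bop_zero[OF T] by (simp add: head_def)
  next
    case (Suc N)
    have "head (Suc N) = vadd (head N) (vscale (x N) (basis_vec N))"
      by (auto simp: head_def vadd_def vscale_def basis_vec_def less_Suc_eq)
    then show ?case
      using Suc Bop_vadd[OF T head ell2_vscale[OF basis_vec_ell2]] Bop_vscale[OF T basis_vec_ell2]
      by (simp add: vadd_def vscale_def entry_def)
  qed
  have split: "T x j - (\<Sum>i<N. x i * entry T j i) = T (tail N) j" for N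
  proof -
    have "x = vadd (head N) (tail N)" by (auto simp: head_def tail_def vadd_def)
    then have "T x = vadd (T (head N)) (T (tail N))" using Bop_vadd[OF T head tail] by metis
    then show ?thesis by (simp add: vadd_def T_head)
  qed
  have bound: "norm (T x j - (\<Sum>i<N. x i * entry T j i)) \<le> C * l2norm (tail N)" for N
    unfolding split using norm_le_l2norm[OF Bop_ell2[OF T tail]] C[OF tail] by (rule order_trans)
  have "(\<lambda>N. C * l2norm (tail N)) \<longlonglongrightarrow> 0"
    using l2norm_tail_tendsto_0[OF x] unfolding tail_def by (rule tendsto_mult_right_zero)
  then have "(\<lambda>N. T x j - (\<Sum>i<N. x i * entry T j i)) \<longlonglongrightarrow> 0"
    by (rule Lim_null_comparison[OF always_eventually, rotated]) (simp add: bound)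
  then have "(\<lambda>N. T x j - (T x j - (\<Sum>i<N. x i * entry T j i))) \<longlonglongrightarrow> T x j - 0"
    by (intro tendsto_diff tendsto_const)
  then show ?thesis by (simp add: sums_def)
qed

section \<open>Block-diagonal operators\<close>

type_synonym mat2 = "bool \<Rightarrow> bool \<Rightarrow> complex"

text \<open>Index \<open>2 * n + of_bool u\<close> addresses the basis vector \<open>e\<^sub>2\<^sub>n\<close> (\<open>u = False\<close>) or
  \<open>e\<^sub>2\<^sub>n\<^sub>+\<^sub>1\<close> (\<open>u = True\<close>) of \<open>H\<^sub>n\<close>.\<close>

lemma div2_block_index [simp]: "(2 * n + of_bool u) div 2 = (n::nat)"
  by (cases u) auto

lemma odd_block_index [simp]: "odd (2 * n + of_bool u :: nat) \<longleftrightarrow> u"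
  by (cases u) auto

lemma block_index_div2: "2 * (j div 2) + of_bool (odd j) = (j::nat)"
  using div_mult_mod_eq[of j 2] by (simp add: of_bool_odd_eq_mod_2 mult.commute)

lemma sum_UNIV_bool: "(\<Sum>v\<in>UNIV. f v) = f False + f True"
  by (simp add: UNIV_bool)

lemma sum_UNIV_bool_split: "(\<Sum>w\<in>UNIV. f w) = f k + f (\<not> k)"
  by (cases k) (simp_all add: sum_UNIV_bool add.commute)

lemma sum_pairs: "(\<Sum>j<2*N. f j) = (\<Sum>n<N. f (2*n) + f (2*n+1))"
  for f :: "nat \<Rightarrow> 'a::comm_monoid_add"
  by (induction N) (auto simp: sum.lessThan_Suc add.assoc)

definition block :: "op \<Rightarrow> nat \<Rightarrow> mat2" where
  "block T n u v = entry T (2 * n + of_bool u) (2 * n + of_bool v)"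

definition block_op :: "(nat \<Rightarrow> mat2) \<Rightarrow> op" where
  "block_op B x = (if x \<in> ell2
     then (\<lambda>j. \<Sum>v\<in>UNIV. B (j div 2) (odd j) v * x (2 * (j div 2) + of_bool v))
     else (\<lambda>j. 0))"

definition mat2_mult :: "mat2 \<Rightarrow> mat2 \<Rightarrow> mat2" where
  "mat2_mult M N u v = (\<Sum>w\<in>UNIV. M u w * N w v)"

lemma mat2_mult_assoc: "mat2_mult (mat2_mult L M) N = mat2_mult L (mat2_mult M N)"
  by (simp add: mat2_mult_def fun_eq_iff sum_UNIV_bool algebra_simps)

lemma norm_block_op_power2_le:
  assumes x: "x \<in> ell2" and B: "\<And>u v. cmod (B (j div 2) u v) \<le> K"
  shows "(cmod (block_op B x j))\<^sup>2
    \<le> 2 * K\<^sup>2 * ((cmod (x (2 * (j div 2))))\<^sup>2 + (cmod (x (2 * (j div 2) + 1)))\<^sup>2)"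
proof -
  have "(cmod (block_op B x j))\<^sup>2 \<le> 2 * (cmod (B (j div 2) (odd j) False * x (2 * (j div 2))))\<^sup>2
      + 2 * (cmod (B (j div 2) (odd j) True * x (2 * (j div 2) + 1)))\<^sup>2"
    using x norm_add_power2_le by (simp add: block_op_def sum_UNIV_bool)
  also have "\<dots> \<le> 2 * (K\<^sup>2 * (cmod (x (2 * (j div 2))))\<^sup>2) + 2 * (K\<^sup>2 * (cmod (x (2 * (j div 2) + 1)))\<^sup>2)"
    using B by (intro add_mono mult_left_mono)
      (auto simp: norm_mult power_mult_distrib intro!: mult_right_mono power_mono)
  finally show ?thesis by (simp add: algebra_simps)
qed

lemma sum_block_op_le:
  assumes x: "x \<in> ell2" and B: "\<And>n u v. cmod (B n u v) \<le> K n"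
  shows "(\<Sum>j<2*N. (cmod (block_op B x j))\<^sup>2)
    \<le> (\<Sum>n<N. 4 * (K n)\<^sup>2 * ((cmod (x (2*n)))\<^sup>2 + (cmod (x (2*n+1)))\<^sup>2))"
  unfolding sum_pairs
proof (rule sum_mono)
  fix n :: nat
  have "(2 * n + 1) div 2 = n" by simp
  then show "(cmod (block_op B x (2*n)))\<^sup>2 + (cmod (block_op B x (2*n+1)))\<^sup>2
      \<le> 4 * (K n)\<^sup>2 * ((cmod (x (2*n)))\<^sup>2 + (cmod (x (2*n+1)))\<^sup>2)"
    using norm_block_op_power2_le[OF x, of B "2*n" "K n"] norm_block_op_power2_le[OF x, of B "2*n+1" "K n"] B
    by simp
qed

lemma block_op_ell2:
  assumes x: "x \<in> ell2" and B: "\<And>n u v. cmod (B n u v) \<le> K"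
  shows "block_op B x \<in> ell2" and "l2norm (block_op B x) \<le> 2 * K * l2norm x"
proof -
  have K: "0 \<le> K" using order_trans[OF norm_ge_zero B] .
  have bound: "(\<Sum>j<N. (cmod (block_op B x j))\<^sup>2) \<le> 4 * K\<^sup>2 * (l2norm x)\<^sup>2" for N
  proof -
    have "(\<Sum>j<N. (cmod (block_op B x j))\<^sup>2) \<le> (\<Sum>j<2*N. (cmod (block_op B x j))\<^sup>2)"
      by (rule sum_mono2) auto
    also have "\<dots> \<le> 4 * K\<^sup>2 * (\<Sum>j<2*N. (cmod (x j))\<^sup>2)"
      using sum_block_op_le[OF x, of B "\<lambda>_. K" N] B by (simp add: sum_pairs sum_distrib_left)
    also have "\<dots> \<le> 4 * K\<^sup>2 * (l2norm x)\<^sup>2"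
      using sum_le_l2norm_power2[OF _ x] by (intro mult_left_mono) auto
    finally show ?thesis .
  qed
  show "block_op B x \<in> ell2" by (rule ell2_bounded_partial_sums(1)[OF bound])
  have "l2norm (block_op B x) \<le> sqrt (4 * K\<^sup>2 * (l2norm x)\<^sup>2)"
    by (rule ell2_bounded_partial_sums(2)[OF bound])
  also have "\<dots> = 2 * K * l2norm x"
    using K l2norm_nonneg[OF x] by (simp add: real_sqrt_mult)
  finally show "l2norm (block_op B x) \<le> 2 * K * l2norm x" .
qed

lemma block_op_Bop:
  assumes B: "\<And>n u v. cmod (B n u v) \<le> K"
  shows "block_op B \<in> Bop"
  unfolding Bop_def bounded_op_def mem_Collect_eq
proof (intro conjI ballI allI impI)
  show "block_op B x \<in> ell2" if "x \<in> ell2" for x by (rule block_op_ell2(1)[OF that B])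
  show "\<exists>C. \<forall>x\<in>ell2. l2norm (block_op B x) \<le> C * l2norm x"
    using block_op_ell2(2)[of _ B K, OF _ B] by blast
  show "block_op B x = (\<lambda>j. 0)" if "x \<notin> ell2" for x using that by (simp add: block_op_def)
  show "block_op B (vadd x y) = vadd (block_op B x) (block_op B y)" if "x \<in> ell2" "y \<in> ell2" for x y
    using that ell2_vadd[OF that] by (auto simp: block_op_def vadd_def sum_UNIV_bool algebra_simps)
  show "block_op B (vscale c x) = vscale c (block_op B x)" if "x \<in> ell2" for x c
    using that ell2_vscale[OF that] by (auto simp: block_op_def vscale_def sum_UNIV_bool algebra_simps)
qed

lemma block_op_vsub:
  assumes "x \<in> ell2" "y \<in> ell2"
  shows "block_op B (vsub x y) = vsub (block_op B x) (block_op B y)"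
  using assms ell2_vsub[OF assms] by (simp add: block_op_def vsub_def sum_UNIV_bool algebra_simps)

lemma entry_block_op:
  "entry (block_op B) j i = (if i div 2 = j div 2 then B (j div 2) (odd j) (odd i) else 0)"
proof -
  have "entry (block_op B) j i = (\<Sum>v\<in>UNIV. B (j div 2) (odd j) v * basis_vec i (2 * (j div 2) + of_bool v))"
    by (simp add: entry_def block_op_def)
  also have "\<dots> = (if i div 2 = j div 2 then B (j div 2) (odd j) (odd i) else 0)"
    using block_index_div2[of i] by (auto simp: sum_UNIV_bool basis_vec_def)
  finally show ?thesis .
qed

lemma block_block_op [simp]: "block (block_op B) = B"
  by (simp add: fun_eq_iff block_def entry_block_op)

lemma A0I:
  assumes "T \<in> Bop" and "\<And>j i. i div 2 \<noteq> j div 2 \<Longrightarrow> entry T j i = 0"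
  shows "T \<in> A0"
  unfolding A0_def
proof (intro CollectI conjI allI impI assms(1))
  fix k m assume "l2inner (T (basis_vec k)) (basis_vec m) \<noteq> 0"
  then have "k div 2 = m div 2" using assms(2)[of k m] by (auto simp: entry_def)
  moreover have "k = 2 * (k div 2) \<or> k = 2 * (k div 2) + 1" "m = 2 * (m div 2) \<or> m = 2 * (m div 2) + 1"
    by presburger+
  ultimately show "\<exists>n. {k, m} \<subseteq> {2 * n, 2 * n + 1}"
    by (intro exI[of _ "m div 2"]) auto
qed

lemma block_op_A0:
  assumes B: "\<And>n u v. cmod (B n u v) \<le> K"
  shows "block_op B \<in> A0"
  by (rule A0I[OF block_op_Bop[OF B]]) (simp add: entry_block_op)

lemma A0_Bop: "T \<in> A0 \<Longrightarrow> T \<in> Bop"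
  by (simp add: A0_def)

lemma A0_entry_eq_0:
  fixes i j :: nat
  assumes "T \<in> A0" and "i div 2 \<noteq> j div 2"
  shows "entry T j i = 0"
proof (rule ccontr)
  assume "entry T j i \<noteq> 0"
  then obtain n where "{i, j} \<subseteq> {2*n, 2*n+1}" using assms(1) by (auto simp: A0_def entry_def)
  then show False using assms(2) by auto
qed

lemma A0_eq_block_op:
  assumes T: "T \<in> A0"
  shows "T = block_op (block T)"
proof
  fix x
  show "T x = block_op (block T) x"
  proof (cases "x \<in> ell2")
    case False
    then show ?thesis using Bop_outside[OF A0_Bop[OF T]] by (simp add: block_op_def)
  next
    case x: True
    show ?thesis
    proof
      fix j :: nat
      let ?I = "{2 * (j div 2), 2 * (j div 2) + 1}"
      have "(\<lambda>i. x i * entry T j i) = (\<lambda>i. if i \<in> ?I then x i * entry T j i else 0)"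
        using A0_entry_eq_0[OF T] by (auto simp: fun_eq_iff)
      then have "(\<lambda>i. x i * entry T j i) sums (\<Sum>i\<in>?I. x i * entry T j i)"
        using sums_If_finite_set[of ?I] by simp
      then have "T x j = (\<Sum>i\<in>?I. x i * entry T j i)"
        using Bop_apply_sums[OF A0_Bop[OF T] x] sums_unique2 by blast
      also have "\<dots> = x (2 * (j div 2)) * entry T j (2 * (j div 2))
          + x (2 * (j div 2) + 1) * entry T j (2 * (j div 2) + 1)"
        by simp
      also have "\<dots> = block_op (block T) x j"
        using x by (simp add: block_op_def block_def sum_UNIV_bool block_index_div2 algebra_simps)
      finally show "T x j = block_op (block T) x j" .
    qed
  qed
qed

lemma A0_block_bounded:
  assumes "T \<in> A0"
  obtains K where "\<And>n u v. cmod (block T n u v) \<le> K"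
  using Bop_entries_bounded[OF A0_Bop[OF assms]] unfolding block_def by metis

lemma block_op_zero: "block_op (\<lambda>n u v. 0) = (\<lambda>x j. 0)"
  by (simp add: fun_eq_iff block_op_def)

lemma op_add_block_op: "op_add (block_op B) (block_op C) = block_op (\<lambda>n u v. B n u v + C n u v)"
  by (simp add: fun_eq_iff op_add_def block_op_def vadd_def sum_UNIV_bool algebra_simps)

lemma op_sub_block_op: "op_sub (block_op B) (block_op C) = block_op (\<lambda>n u v. B n u v - C n u v)"
  by (simp add: fun_eq_iff op_sub_def block_op_def vsub_def sum_UNIV_bool algebra_simps)

lemma op_scale_block_op: "op_scale c (block_op B) = block_op (\<lambda>n u v. c * B n u v)"
  by (simp add: fun_eq_iff op_scale_def block_op_def vscale_def sum_UNIV_bool algebra_simps)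

lemma op_mult_block_op:
  assumes C: "\<And>n u v. cmod (C n u v) \<le> K"
  shows "op_mult (block_op B) (block_op C) = block_op (\<lambda>n. mat2_mult (B n) (C n))"
proof
  fix x
  show "op_mult (block_op B) (block_op C) x = block_op (\<lambda>n. mat2_mult (B n) (C n)) x"
    using block_op_ell2(1)[of x C K, OF _ C]
    by (cases "x \<in> ell2") (simp_all add: fun_eq_iff op_mult_def block_op_def mat2_mult_def
        sum_UNIV_bool algebra_simps)
qed

lemma A0_closed:
  assumes "T \<in> A0" "S \<in> A0"
  shows "op_add T S \<in> A0" "op_sub T S \<in> A0" "op_scale c T \<in> A0" "op_mult T S \<in> A0"
proof -
  obtain K1 where K1: "\<And>n u v. cmod (block T n u v) \<le> K1" using A0_block_bounded[OF assms(1)] by blast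
  obtain K2 where K2: "\<And>n u v. cmod (block S n u v) \<le> K2" using A0_block_bounded[OF assms(2)] by blast
  have T: "T = block_op (block T)" and S: "S = block_op (block S)"
    using A0_eq_block_op assms by blast+
  have "cmod (block T n u v + block S n u v) \<le> K1 + K2" for n u v
    using norm_triangle_ineq[of "block T n u v" "block S n u v"] K1[of n u v] K2[of n u v] by linarith
  then show "op_add T S \<in> A0"
    by (subst T, subst S, unfold op_add_block_op) (rule block_op_A0)
  have "cmod (block T n u v - block S n u v) \<le> K1 + K2" for n u v
    using norm_triangle_ineq4[of "block T n u v" "block S n u v"] K1[of n u v] K2[of n u v] by linarith
  then show "op_sub T S \<in> A0"
    by (subst T, subst S, unfold op_sub_block_op) (rule block_op_A0)
  have "cmod (c * block T n u v) \<le> cmod c * K1" for n u v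
    unfolding norm_mult using K1 by (rule mult_left_mono) simp
  then show "op_scale c T \<in> A0"
    by (subst T, unfold op_scale_block_op) (rule block_op_A0)
  have TS: "op_mult T S = block_op (\<lambda>n. mat2_mult (block T n) (block S n))"
    by (subst T, subst S) (rule op_mult_block_op[OF K2])
  have "cmod (mat2_mult (block T n) (block S n) u v) \<le> 2 * (K1 * K2)" for n u v
  proof -
    have "cmod (mat2_mult (block T n) (block S n) u v)
        \<le> cmod (block T n u False) * cmod (block S n False v) + cmod (block T n u True) * cmod (block S n True v)"
      unfolding mat2_mult_def sum_UNIV_bool norm_mult[symmetric] by (rule norm_triangle_ineq)
    also have "\<dots> \<le> K1 * K2 + K1 * K2"
      using K1 K2 by (intro add_mono mult_mono) (auto intro: order_trans[OF norm_ge_zero])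
    finally show ?thesis by simp
  qed
  then show "op_mult T S \<in> A0" unfolding TS by (rule block_op_A0)
qed

lemma block_mult:
  assumes "T \<in> A0" "S \<in> A0"
  shows "block (op_mult T S) n = mat2_mult (block T n) (block S n)"
proof -
  obtain K where K: "\<And>n u v. cmod (block S n u v) \<le> K" using A0_block_bounded[OF assms(2)] by blast
  show ?thesis
    by (subst A0_eq_block_op[OF assms(1)], subst A0_eq_block_op[OF assms(2)]) (simp add: op_mult_block_op[OF K])
qed

lemma block_add: "block (op_add T S) n u v = block T n u v + block S n u v"
  by (simp add: block_def entry_op_add)

lemma block_sub: "block (op_sub T S) n u v = block T n u v - block S n u v"
  by (simp add: block_def entry_op_sub)

lemma block_scale: "block (op_scale c T) n u v = c * block T n u v"
  by (simp add: block_def entry_op_scale)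

lemma A0_limit:
  assumes T: "\<And>p. T p \<in> A0" and S: "S \<in> Bop" and lim: "(\<lambda>p. opnorm (op_sub (T p) S)) \<longlonglongrightarrow> 0"
  shows "S \<in> A0"
proof (rule A0I[OF S])
  fix j i :: nat assume ij: "i div 2 \<noteq> j div 2"
  have "cmod (entry S j i) \<le> opnorm (op_sub (T p) S)" for p
    using norm_entry_diff_le_opnorm[OF A0_Bop[OF T] S, of p j i] A0_entry_eq_0[OF T ij] by simp
  then have "cmod (entry S j i) \<le> 0" by (intro LIMSEQ_le_const[OF lim]) auto
  then show "entry S j i = 0" by simp
qed

definition adjoint_op :: "op \<Rightarrow> op" where
  "adjoint_op T = block_op (\<lambda>n u v. cnj (block T n v u))"

lemma adjoint_op_A0:
  assumes "T \<in> A0"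
  shows "adjoint_op T \<in> A0"
proof -
  obtain K where K: "\<And>n u v. cmod (block T n u v) \<le> K" using A0_block_bounded[OF assms] by blast
  show ?thesis unfolding adjoint_op_def by (rule block_op_A0[where K=K]) (simp add: K)
qed

lemma is_adjoint_adjoint_op:
  assumes T: "T \<in> A0"
  shows "is_adjoint T (adjoint_op T)"
  unfolding is_adjoint_def
proof (intro conjI ballI)
  let ?S = "adjoint_op T"
  show S: "?S \<in> Bop" by (rule A0_Bop[OF adjoint_op_A0[OF T]])
  fix x y assume x: "x \<in> ell2" and y: "y \<in> ell2"
  have "(\<lambda>n. T x (2*n) * cnj (y (2*n)) + T x (2*n+1) * cnj (y (2*n+1))) sums l2inner (T x) y"
    by (rule l2inner_sums_pairs[OF Bop_ell2[OF A0_Bop[OF T] x] y])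
  moreover have "(\<lambda>n. x (2*n) * cnj (?S y (2*n)) + x (2*n+1) * cnj (?S y (2*n+1))) sums l2inner x (?S y)"
    by (rule l2inner_sums_pairs[OF x Bop_ell2[OF S y]])
  moreover have "T x (2*n) * cnj (y (2*n)) + T x (2*n+1) * cnj (y (2*n+1))
      = x (2*n) * cnj (?S y (2*n)) + x (2*n+1) * cnj (?S y (2*n+1))" for n
  proof -
    have "Suc (2 * n) div 2 = n" "odd (Suc (2 * n))" by simp_all
    moreover have "T x = block_op (block T) x" using fun_cong[OF A0_eq_block_op[OF T]] .
    ultimately show ?thesis
      using x y by (simp add: adjoint_op_def block_op_def sum_UNIV_bool algebra_simps)
  qed
  ultimately show "l2inner (T x) y = l2inner x (?S y)" by (simp add: sums_unique2)
qed

lemma proj_eq_block_op: "proj X = block_op (\<lambda>n u v. of_bool (n \<in> X \<and> u = v))"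
proof
  fix x
  show "proj X x = block_op (\<lambda>n u v. of_bool (n \<in> X \<and> u = v)) x"
    using block_index_div2 by (cases "x \<in> ell2") (auto simp: fun_eq_iff proj_def block_op_def sum_UNIV_bool)
qed

lemma compress_A0_eq_block_op:
  assumes "T \<in> A0"
  shows "op_mult (proj X) (op_mult T (proj X)) = block_op (\<lambda>n. if n \<in> X then block T n else (\<lambda>u v. 0))"
proof -
  let ?P = "\<lambda>n u v. of_bool (n \<in> X \<and> u = v) :: complex"
  let ?B = "\<lambda>n. if n \<in> X then block T n else (\<lambda>u v. 0)"
  obtain K where K: "\<And>n u v. cmod (block T n u v) \<le> K" using A0_block_bounded[OF assms] by blast
  have P: "\<And>n u v. cmod (?P n u v) \<le> 1" by simp
  have B: "cmod (?B n u v) \<le> K" for n u v using K order_trans[OF norm_ge_zero K] by simp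
  have "mat2_mult (block T n) (?P n) = ?B n" "mat2_mult (?P n) (?B n) = ?B n" for n
    by (auto simp: fun_eq_iff mat2_mult_def sum_UNIV_bool)
  then show ?thesis
    unfolding proj_eq_block_op
    by (subst A0_eq_block_op[OF assms]) (simp add: op_mult_block_op[OF P] op_mult_block_op[OF B])
qed

lemma block_op_A0_on:
  assumes B: "\<And>n u v. cmod (B n u v) \<le> K" and outside: "\<And>n u v. n \<notin> X \<Longrightarrow> B n u v = 0"
  shows "block_op B \<in> A0_on X"
  unfolding A0_on_def
proof (intro CollectI conjI allI impI ballI)
  show "block_op B \<in> A0" by (rule block_op_A0[OF B])
  fix n x assume n: "n \<notin> X" and x: "x \<in> Hblock n"
  have x0: "x j = 0" if "j div 2 \<noteq> n" for j
  proof -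
    have "j \<noteq> 2 * n \<and> j \<noteq> 2 * n + 1" using that by auto
    then show ?thesis using x by (simp add: Hblock_def)
  qed
  have "x \<in> ell2" by (rule ell2_finite_support[of "2*n+2"]) (use x0 in auto)
  moreover have "(\<Sum>v\<in>UNIV. B (j div 2) (odd j) v * x (2 * (j div 2) + of_bool v)) = 0" for j
    using outside[of "j div 2"] x0[of "2 * (j div 2)"] x0[of "2 * (j div 2) + 1"] n
    by (cases "j div 2 = n") (auto simp: sum_UNIV_bool)
  ultimately show "block_op B x = (\<lambda>j. 0)" by (simp add: block_op_def)
qed

lemma A0_onD: "T \<in> A0_on X \<Longrightarrow> T \<in> A0"
  by (simp add: A0_on_def)

section \<open>Compact block-diagonal operators\<close>

definition blocks_vanish :: "op \<Rightarrow> bool" where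
  "blocks_vanish T \<longleftrightarrow> (\<forall>u v. (\<lambda>n. block T n u v) \<longlonglongrightarrow> 0)"

lemma coordinatewise_convergent_subseq:
  fixes x :: "nat \<Rightarrow> nat \<Rightarrow> complex"
  assumes bounded: "\<And>k j. cmod (x k j) \<le> B"
  shows "\<exists>r z. strict_mono r \<and> (\<forall>j. (\<lambda>k. x (r k) j) \<longlonglongrightarrow> z j)"
proof -
  let ?P = "\<lambda>j s. convergent (\<lambda>k. x (s k) j)"
  interpret subseqs ?P
  proof
    fix j :: nat and s :: "nat \<Rightarrow> nat"
    have "\<forall>k. x (s k) j \<in> cball 0 B" using bounded by simp
    then obtain l s' where "strict_mono s'" "((\<lambda>k. x (s k) j) \<circ> s') \<longlonglongrightarrow> l"
      by (rule seq_compactE[OF compact_imp_seq_compact[OF compact_cball]]) blast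
    then show "\<exists>s'. strict_mono s' \<and> ?P j (s \<circ> s')"
      by (auto simp: comp_def convergent_def)
  qed
  have "convergent (\<lambda>k. x (diagseq k) j)" for j
  proof -
    have "(\<lambda>k. x ((seqseq (Suc j) \<circ> (\<lambda>k. fold_reduce (Suc j) k (Suc j + k))) k) j)
        = (\<lambda>k. x (seqseq (Suc j) k) j) \<circ> (\<lambda>k. fold_reduce (Suc j) k (Suc j + k))"
      by auto
    then have "?P j (diagseq \<circ> (+) (Suc j))"
      unfolding diagseq_seqseq
      by (simp only:) (intro convergent_subseq_convergent seqseq_holds subseq_diagonal_rest)
    then obtain L where "(\<lambda>k. x (diagseq (k + Suc j)) j) \<longlonglongrightarrow> L"
      by (auto simp: convergent_def comp_def add.commute)
    then show ?thesis
      unfolding convergent_def by (blast intro: LIMSEQ_offset)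
  qed
  then have "(\<lambda>k. x (diagseq k) j) \<longlonglongrightarrow> lim (\<lambda>k. x (diagseq k) j)" for j
    by (simp add: convergent_LIMSEQ_iff)
  then show ?thesis
    using subseq_diagseq by (intro exI[of _ diagseq] exI[of _ "\<lambda>j. lim (\<lambda>k. x (diagseq k) j)"]) simp
qed

lemma l2norm_block_op_power2_le:
  assumes x: "x \<in> ell2" and K: "\<And>n u v. cmod (B n u v) \<le> K"
    and \<delta>: "\<And>n u v. N \<le> n \<Longrightarrow> cmod (B n u v) \<le> \<delta>"
  shows "(l2norm (block_op B x))\<^sup>2 \<le> 4 * K\<^sup>2 * (\<Sum>j<2*N. (cmod (x j))\<^sup>2) + 4 * \<delta>\<^sup>2 * (l2norm x)\<^sup>2"
proof -
  let ?c = "\<lambda>n. (cmod (x (2*n)))\<^sup>2 + (cmod (x (2*n+1)))\<^sup>2"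
  define Kn where "Kn n = (if n < N then K else \<delta>)" for n
  have bound: "(\<Sum>j<M. (cmod (block_op B x j))\<^sup>2)
      \<le> 4 * K\<^sup>2 * (\<Sum>j<2*N. (cmod (x j))\<^sup>2) + 4 * \<delta>\<^sup>2 * (l2norm x)\<^sup>2" for M
  proof -
    have "(\<Sum>j<M. (cmod (block_op B x j))\<^sup>2) \<le> (\<Sum>j<2*(M+N). (cmod (block_op B x j))\<^sup>2)"
      by (rule sum_mono2) auto
    also have "\<dots> \<le> (\<Sum>n<M+N. 4 * (Kn n)\<^sup>2 * ?c n)"
      by (rule sum_block_op_le[OF x]) (use K \<delta> in \<open>auto simp: Kn_def not_less\<close>)
    also have "\<dots> = (\<Sum>n<N. 4 * K\<^sup>2 * ?c n) + (\<Sum>n\<in>{N..<M+N}. 4 * \<delta>\<^sup>2 * ?c n)"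
      using sum.atLeastLessThan_concat[of 0 N "M+N" "\<lambda>n. 4 * (Kn n)\<^sup>2 * ?c n"]
      by (simp add: atLeast0LessThan Kn_def)
    also have "(\<Sum>n\<in>{N..<M+N}. 4 * \<delta>\<^sup>2 * ?c n) \<le> (\<Sum>n<M+N. 4 * \<delta>\<^sup>2 * ?c n)"
      by (rule sum_mono2) auto
    also have "(\<Sum>n<N. 4 * K\<^sup>2 * ?c n) + (\<Sum>n<M+N. 4 * \<delta>\<^sup>2 * ?c n)
        = 4 * K\<^sup>2 * (\<Sum>j<2*N. (cmod (x j))\<^sup>2) + 4 * \<delta>\<^sup>2 * (\<Sum>j<2*(M+N). (cmod (x j))\<^sup>2)"
      by (simp only: sum_pairs sum_distrib_left)
    also have "\<dots> \<le> 4 * K\<^sup>2 * (\<Sum>j<2*N. (cmod (x j))\<^sup>2) + 4 * \<delta>\<^sup>2 * (l2norm x)\<^sup>2"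
      using sum_le_l2norm_power2[OF _ x] by (intro add_left_mono mult_left_mono) auto
    finally show ?thesis by simp
  qed
  have "l2norm (block_op B x) \<le> sqrt (4 * K\<^sup>2 * (\<Sum>j<2*N. (cmod (x j))\<^sup>2) + 4 * \<delta>\<^sup>2 * (l2norm x)\<^sup>2)"
    by (rule ell2_bounded_partial_sums(2)[OF bound])
  then have "(l2norm (block_op B x))\<^sup>2
      \<le> (sqrt (4 * K\<^sup>2 * (\<Sum>j<2*N. (cmod (x j))\<^sup>2) + 4 * \<delta>\<^sup>2 * (l2norm x)\<^sup>2))\<^sup>2"
    using l2norm_nonneg[OF block_op_ell2(1)[OF x K]] by (rule power_mono)
  then show ?thesis by (simp add: sum_nonneg)
qed

text \<open>Small tail entries make the tail negligible; the head is a finite sum of coordinates,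
  which tend to \<open>0\<close> one by one.\<close>

lemma block_op_tendsto_0:
  assumes K: "\<And>n u v. cmod (B n u v) \<le> K" and vanish: "\<And>u v. (\<lambda>n. B n u v) \<longlonglongrightarrow> 0"
    and w: "\<And>k. w k \<in> ell2" "\<And>k. l2norm (w k) \<le> W" and coords: "\<And>j. (\<lambda>k. w k j) \<longlonglongrightarrow> 0"
  shows "(\<lambda>k. l2norm (block_op B (w k))) \<longlonglongrightarrow> 0"
proof (rule LIMSEQ_I)
  fix \<epsilon> :: real assume \<epsilon>: "0 < \<epsilon>"
  have W: "0 \<le> W" using order_trans[OF l2norm_nonneg[OF w(1)] w(2)] .
  define \<delta> where "\<delta> = \<epsilon> / (4 * (W + 1))"
  have "0 < \<delta>" using \<epsilon> W by (simp add: \<delta>_def)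
  have "4 * \<delta> * W \<le> \<epsilon>" using \<epsilon> W by (simp add: \<delta>_def field_simps)
  then have "(2 * \<delta> * W)\<^sup>2 \<le> (\<epsilon> / 2)\<^sup>2"
    using \<open>0 < \<delta>\<close> W by (intro power_mono) auto
  then have \<delta>: "0 < \<delta>" "4 * \<delta>\<^sup>2 * W\<^sup>2 \<le> \<epsilon>\<^sup>2 / 4"
    using \<open>0 < \<delta>\<close> by (auto simp: power_mult_distrib power_divide)
  have "\<forall>\<^sub>F n in sequentially. cmod (B n u v) < \<delta>" for u v
    using tendstoD[OF vanish \<delta>(1)] by simp
  then have "\<forall>\<^sub>F n in sequentially. \<forall>u v. cmod (B n u v) < \<delta>"
    by (rule eventually_all_finite[OF eventually_all_finite])
  then obtain N where tail_small: "\<And>n u v. N \<le> n \<Longrightarrow> cmod (B n u v) \<le> \<delta>"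
    unfolding eventually_sequentially by (meson less_imp_le)
  have "(\<lambda>k. 4 * K\<^sup>2 * (\<Sum>j<2*N. (cmod (w k j))\<^sup>2)) \<longlonglongrightarrow> 4 * K\<^sup>2 * (\<Sum>j<2*N. (cmod (0::complex))\<^sup>2)"
    by (intro tendsto_intros coords)
  then have "\<forall>\<^sub>F k in sequentially. 4 * K\<^sup>2 * (\<Sum>j<2*N. (cmod (w k j))\<^sup>2) < \<epsilon>\<^sup>2 / 2"
    using \<epsilon> by (intro order_tendstoD(2)) auto
  then obtain k0 where k0: "\<And>k. k0 \<le> k \<Longrightarrow> 4 * K\<^sup>2 * (\<Sum>j<2*N. (cmod (w k j))\<^sup>2) < \<epsilon>\<^sup>2 / 2"
    unfolding eventually_sequentially by blast
  have "l2norm (block_op B (w k)) < \<epsilon>" if "k0 \<le> k" for k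
  proof (rule power2_less_imp_less)
    have "4 * \<delta>\<^sup>2 * (l2norm (w k))\<^sup>2 \<le> 4 * \<delta>\<^sup>2 * W\<^sup>2"
      using w l2norm_nonneg[OF w(1)] by (intro mult_left_mono power_mono) auto
    moreover have "(l2norm (block_op B (w k)))\<^sup>2
        \<le> 4 * K\<^sup>2 * (\<Sum>j<2*N. (cmod (w k j))\<^sup>2) + 4 * \<delta>\<^sup>2 * (l2norm (w k))\<^sup>2"
      by (rule l2norm_block_op_power2_le) (use w(1) K tail_small in auto)
    ultimately show "(l2norm (block_op B (w k)))\<^sup>2 < \<epsilon>\<^sup>2"
      using k0[OF that] \<delta>(2) zero_less_power[OF \<epsilon>, of 2] by linarith
  qed (use \<epsilon> in simp)
  then show "\<exists>k0. \<forall>k\<ge>k0. norm (l2norm (block_op B (w k)) - 0) < \<epsilon>"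
    using l2norm_nonneg[OF block_op_ell2(1)[OF w(1) K]] by auto
qed

lemma compact_block_op:
  assumes K: "\<And>n u v. cmod (B n u v) \<le> K" and vanish: "\<And>u v. (\<lambda>n. B n u v) \<longlonglongrightarrow> 0"
  shows "compact_op (block_op B)"
  unfolding compact_op_def
proof (intro conjI allI impI)
  show "block_op B \<in> Bop" by (rule block_op_Bop[OF K])
  fix x :: "nat \<Rightarrow> nat \<Rightarrow> complex"
  assume "(\<forall>n. x n \<in> ell2) \<and> (\<exists>C. \<forall>n. l2norm (x n) \<le> C)"
  then obtain C where x: "\<And>n. x n \<in> ell2" and C: "\<And>n. l2norm (x n) \<le> C" by blast
  have "cmod (x k j) \<le> C" for k j using order_trans[OF norm_le_l2norm[OF x] C] .
  from coordinatewise_convergent_subseq[of x C, OF this]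
  obtain r z where r: "strict_mono r" and z: "\<And>j. (\<lambda>k. x (r k) j) \<longlonglongrightarrow> z j"
    by blast
  have z_ell2: "z \<in> ell2" and "l2norm z \<le> C"
    using coordinatewise_limit_ell2[of "\<lambda>k. x (r k)", OF x C z] by auto
  define w where "w k = vsub (x (r k)) z" for k
  have w: "w k \<in> ell2" "l2norm (w k) \<le> 2 * C" for k
    unfolding w_def using ell2_vsub[OF x z_ell2] l2norm_vsub_le[OF x z_ell2 C \<open>l2norm z \<le> C\<close>] by auto
  have "(\<lambda>k. w k j) \<longlonglongrightarrow> 0" for j
    using tendsto_diff[OF z[of j] tendsto_const[of "z j"]] by (simp add: w_def vsub_def)
  then have "(\<lambda>k. l2norm (block_op B (w k))) \<longlonglongrightarrow> 0"
    by (rule block_op_tendsto_0[OF K vanish w])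
  moreover have "block_op B (w k) = vsub (block_op B (x (r k))) (block_op B z)" for k
    unfolding w_def by (rule block_op_vsub[OF x z_ell2])
  ultimately show "\<exists>r y. strict_mono r \<and> y \<in> ell2 \<and> (\<lambda>n. l2norm (vsub (block_op B (x (r n))) y)) \<longlonglongrightarrow> 0"
    using r block_op_ell2(1)[OF z_ell2 K] by (intro exI[of _ r] exI[of _ "block_op B z"]) simp
qed

lemma A0_basis_images_limit:
  assumes T: "T \<in> A0" and s: "strict_mono s" and y: "y \<in> ell2"
    and lim: "(\<lambda>k. l2norm (vsub (T (basis_vec (s k))) y)) \<longlonglongrightarrow> 0"
  shows "y = (\<lambda>j. 0)"
proof
  fix j
  have "j + 2 \<le> s k" if "j + 2 \<le> k" for k
    using seq_suble[OF s, of k] that by linarith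
  then have "\<forall>\<^sub>F k in sequentially. j + 2 \<le> s k"
    unfolding eventually_sequentially by blast
  then have "\<forall>\<^sub>F k in sequentially. cmod (y j) \<le> l2norm (vsub (T (basis_vec (s k))) y)"
  proof eventually_elim
    case (elim k)
    then have "T (basis_vec (s k)) j = 0"
      using A0_entry_eq_0[OF T, of "s k" j] by (simp add: entry_def)
    then show ?case
      using norm_le_l2norm[OF ell2_vsub[OF Bop_ell2[OF A0_Bop[OF T] basis_vec_ell2] y], of "s k" j]
      by (simp add: vsub_def)
  qed
  then have "cmod (y j) \<le> 0"
    by (intro LIMSEQ_le_const[OF lim]) (simp add: eventually_sequentially)
  then show "y j = 0" by simp
qed

lemma compact_A0_basis_images_tendsto_0:
  assumes T: "T \<in> A0" and compact: "compact_op T"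
  shows "(\<lambda>m. l2norm (T (basis_vec m))) \<longlonglongrightarrow> 0"
proof (rule ccontr)
  assume "\<not> ?thesis"
  moreover have "\<bar>l2norm (T (basis_vec m))\<bar> = l2norm (T (basis_vec m))" for m
    using l2norm_nonneg[OF Bop_ell2[OF A0_Bop[OF T] basis_vec_ell2]] by simp
  ultimately obtain \<epsilon> where \<epsilon>: "0 < \<epsilon>"
    and "\<not> (\<forall>\<^sub>F m in sequentially. l2norm (T (basis_vec m)) < \<epsilon>)"
    unfolding tendsto_iff dist_real_def by auto
  from not_eventually_sequentiallyD[OF this(2)]
  have "\<exists>s::nat \<Rightarrow> nat. strict_mono s \<and> (\<forall>k. \<epsilon> \<le> l2norm (T (basis_vec (s k))))"
    by (simp add: not_less)
  then obtain s :: "nat \<Rightarrow> nat" where s: "strict_mono s" and big: "\<And>k. \<epsilon> \<le> l2norm (T (basis_vec (s k)))"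
    by blast
  have "(\<forall>k. basis_vec (s k) \<in> ell2) \<and> (\<exists>C. \<forall>k. l2norm (basis_vec (s k)) \<le> C)"
    by auto
  from compact[unfolded compact_op_def, THEN conjunct2, rule_format, OF this]
  obtain r y where r: "strict_mono r" and y: "y \<in> ell2"
    and lim: "(\<lambda>k. l2norm (vsub (T (basis_vec (s (r k)))) y)) \<longlonglongrightarrow> 0"
    by blast
  have "y = (\<lambda>j. 0)"
    using A0_basis_images_limit[OF T strict_mono_o[OF s r] y] lim by (simp add: comp_def)
  then have "(\<lambda>k. l2norm (T (basis_vec (s (r k))))) \<longlonglongrightarrow> 0"
    using lim by (simp add: vsub_def)
  then have "\<epsilon> \<le> 0" by (rule LIMSEQ_le_const) (use big in auto)
  then show False using \<epsilon> by simp
qed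

lemma compact_A0_iff_blocks_vanish:
  assumes T: "T \<in> A0"
  shows "compact_op T \<longleftrightarrow> blocks_vanish T"
proof
  assume "compact_op T"
  then have images: "(\<lambda>m. l2norm (T (basis_vec m))) \<longlonglongrightarrow> 0"
    by (rule compact_A0_basis_images_tendsto_0[OF T])
  show "blocks_vanish T" unfolding blocks_vanish_def
  proof (intro allI)
    fix u v
    have "strict_mono (\<lambda>n. 2 * n + of_bool v :: nat)" by (rule strict_monoI) simp
    from LIMSEQ_subseq_LIMSEQ[OF images this]
    have lim: "(\<lambda>n. l2norm (T (basis_vec (2 * n + of_bool v)))) \<longlonglongrightarrow> 0" by (simp add: comp_def)
    have "cmod (block T n u v) \<le> l2norm (T (basis_vec (2 * n + of_bool v)))" for n
      unfolding block_def entry_def by (rule norm_le_l2norm[OF Bop_ell2[OF A0_Bop[OF T] basis_vec_ell2]])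
    then show "(\<lambda>n. block T n u v) \<longlonglongrightarrow> 0"
      by (intro Lim_null_comparison[OF _ lim] always_eventually allI)
  qed
next
  assume vanish: "blocks_vanish T"
  obtain K where "\<And>n u v. cmod (block T n u v) \<le> K" using A0_block_bounded[OF T] by blast
  then have "compact_op (block_op (block T))"
    using vanish unfolding blocks_vanish_def by (intro compact_block_op) auto
  then show "compact_op T" using A0_eq_block_op[OF T] by simp
qed

section \<open>The rotated bases\<close>

text \<open>Row \<open>k\<close> of \<open>rot a\<close> holds the coordinates of \<open>f\<^sub>\<alpha>\<^sub>,\<^sub>2\<^sub>n\<close> (\<open>k = False\<close>) or
  \<open>f\<^sub>\<alpha>\<^sub>,\<^sub>2\<^sub>n\<^sub>+\<^sub>1\<close> (\<open>k = True\<close>) in \<open>e\<^sub>2\<^sub>n, e\<^sub>2\<^sub>n\<^sub>+\<^sub>1\<close>; the matrix is symmetric and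
  orthogonal, hence an involution.\<close>

definition rot :: "real \<Rightarrow> mat2" where
  "rot a k u = (if k = u then (if k then - of_real a else of_real a) else of_real (sqrt (1 - a\<^sup>2)))"

definition mat2_id :: mat2 where
  "mat2_id u v = of_bool (u = v)"

definition rot_conj :: "real \<Rightarrow> mat2 \<Rightarrow> mat2" where
  "rot_conj a M = mat2_mult (rot a) (mat2_mult M (rot a))"

lemma rot_sym: "rot a u k = rot a k u"
  by (simp add: rot_def eq_commute)

lemma norm_rot_le_1: "\<bar>a\<bar> \<le> 1 \<Longrightarrow> cmod (rot a k u) \<le> 1"
  using abs_square_le_1[of a] by (auto simp: rot_def)

lemma rot_mult_rot: "\<bar>a\<bar> \<le> 1 \<Longrightarrow> mat2_mult (rot a) (rot a) = mat2_id"
proof -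
  let ?c = "complex_of_real a" and ?s = "complex_of_real (sqrt (1 - a\<^sup>2))"
  assume "\<bar>a\<bar> \<le> 1"
  then have "a * a + sqrt (1 - a\<^sup>2) * sqrt (1 - a\<^sup>2) = 1"
    using abs_square_le_1[of a] by (simp add: power2_eq_square)
  then have "complex_of_real (a * a + sqrt (1 - a\<^sup>2) * sqrt (1 - a\<^sup>2)) = complex_of_real 1"
    by (rule arg_cong)
  then have "?c * ?c + ?s * ?s = 1" by (simp only: of_real_add of_real_mult of_real_1)
  moreover from this have "?s * ?s + ?c * ?c = 1" by (simp add: add.commute)
  ultimately show ?thesis
    by (auto simp: fun_eq_iff mat2_mult_def mat2_id_def rot_def sum_UNIV_bool)
qed

lemma mat2_mult_id [simp]: "mat2_mult mat2_id M = M" "mat2_mult M mat2_id = M"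
  by (auto simp: fun_eq_iff mat2_mult_def mat2_id_def sum_UNIV_bool)

lemma rot_conj_rot_conj:
  assumes "\<bar>a\<bar> \<le> 1"
  shows "rot_conj a (rot_conj a M) = M"
proof -
  have "rot_conj a (rot_conj a M)
      = mat2_mult (mat2_mult (rot a) (rot a)) (mat2_mult M (mat2_mult (rot a) (rot a)))"
    by (simp only: rot_conj_def mat2_mult_assoc)
  then show ?thesis by (simp add: rot_mult_rot[OF assms])
qed

lemma rot_conj_mult:
  assumes "\<bar>a\<bar> \<le> 1"
  shows "rot_conj a (mat2_mult M N) = mat2_mult (rot_conj a M) (rot_conj a N)"
proof -
  have "mat2_mult (rot_conj a M) (rot_conj a N)
      = mat2_mult (rot a) (mat2_mult M (mat2_mult (mat2_mult (rot a) (rot a)) (mat2_mult N (rot a))))"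
    by (simp only: rot_conj_def mat2_mult_assoc)
  then show ?thesis by (simp add: rot_mult_rot[OF assms] rot_conj_def mat2_mult_assoc)
qed

lemma rot_conj_apply:
  "rot_conj a M k l = (\<Sum>u\<in>UNIV. \<Sum>v\<in>UNIV. rot a k u * M u v * rot a l v)"
  by (cases k; cases l) (simp_all add: rot_conj_def mat2_mult_def sum_UNIV_bool rot_def algebra_simps)

lemma cnj_rot [simp]: "cnj (rot a k u) = rot a k u"
  by (simp add: rot_def)

lemma norm_rot_conj_le:
  assumes a: "\<bar>a\<bar> \<le> 1" and M: "\<And>u v. cmod (M u v) \<le> K"
  shows "cmod (rot_conj a M k l) \<le> 4 * K"
proof -
  have K: "0 \<le> K" using order_trans[OF norm_ge_zero M] .
  have each: "cmod (rot a k u * M u v * rot a l v) \<le> K" for u v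
  proof -
    have "cmod (rot a k u * M u v * rot a l v) \<le> 1 * K * 1"
      unfolding norm_mult using norm_rot_le_1[OF a] M K by (intro mult_mono) auto
    then show ?thesis by simp
  qed
  have "cmod (rot_conj a M k l) \<le> (\<Sum>u\<in>UNIV. \<Sum>v\<in>UNIV. cmod (rot a k u * M u v * rot a l v))"
    unfolding rot_conj_apply by (rule order_trans[OF norm_sum sum_mono[OF norm_sum]])
  also have "\<dots> \<le> (\<Sum>u\<in>(UNIV::bool set). \<Sum>v\<in>(UNIV::bool set). K)"
    using each by (intro sum_mono) auto
  finally show ?thesis by (simp add: sum_UNIV_bool)
qed

lemma rot_conj_add: "rot_conj a (\<lambda>u v. M u v + N u v) = (\<lambda>k l. rot_conj a M k l + rot_conj a N k l)"
  by (simp add: fun_eq_iff rot_conj_apply sum_UNIV_bool algebra_simps)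

lemma rot_conj_diff: "rot_conj a (\<lambda>u v. M u v - N u v) = (\<lambda>k l. rot_conj a M k l - rot_conj a N k l)"
  by (simp add: fun_eq_iff rot_conj_apply sum_UNIV_bool algebra_simps)

lemma rot_conj_scale: "rot_conj a (\<lambda>u v. c * M u v) = (\<lambda>k l. c * rot_conj a M k l)"
  by (simp add: fun_eq_iff rot_conj_apply sum_UNIV_bool algebra_simps)

lemma rot_conj_zero [simp]: "rot_conj a (\<lambda>u v. 0) = (\<lambda>k l. 0)"
  by (simp add: fun_eq_iff rot_conj_apply)

lemma rot_conj_adjoint: "rot_conj a (\<lambda>u v. cnj (M v u)) k l = cnj (rot_conj a M l k)"
  by (simp add: rot_conj_apply sum_UNIV_bool rot_sym algebra_simps)

lemma tendsto_rot_conj: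
  assumes "\<And>u v. ((\<lambda>n. M n u v) \<longlongrightarrow> 0) F"
  shows "((\<lambda>n. rot_conj a (M n) k l) \<longlongrightarrow> 0) F"
  unfolding rot_conj_apply sum_UNIV_bool
  by (intro tendsto_add_zero tendsto_mult_left_zero tendsto_mult_right_zero assms)

text \<open>Once the off-diagonal entries vanish, the commutator is that of the diagonal parts, which is \<open>0\<close>.\<close>

lemma mat2_commutator_tendsto_0:
  fixes A B :: "'a \<Rightarrow> mat2"
  assumes A: "\<And>x k l. cmod (A x k l) \<le> K1" and B: "\<And>x k l. cmod (B x k l) \<le> K2"
    and A_lim: "\<And>k. ((\<lambda>x. A x k (\<not> k)) \<longlongrightarrow> 0) F" and B_lim: "\<And>k. ((\<lambda>x. B x k (\<not> k)) \<longlongrightarrow> 0) F"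
  shows "((\<lambda>x. mat2_mult (A x) (B x) k l - mat2_mult (B x) (A x) k l) \<longlongrightarrow> 0) F"
proof -
  have summand: "((\<lambda>x. A x k w * B x w l - B x k w * A x w l) \<longlongrightarrow> 0) F" for w
  proof (cases "w = k")
    case True
    show ?thesis
    proof (cases "l = k")
      case True
      with \<open>w = k\<close> show ?thesis by (simp add: mult.commute)
    next
      case False
      then have l: "l = (\<not> k)" by auto
      show ?thesis unfolding \<open>w = k\<close> l
        using tendsto_diff[OF tendsto_0_mult_bounded(1)[where g="\<lambda>x. A x k k", OF B_lim A]
            tendsto_0_mult_bounded(1)[where g="\<lambda>x. B x k k", OF A_lim B]] by simp
    qed
  next
    case False
    then have w: "w = (\<not> k)" by auto
    show ?thesis unfolding w
      using tendsto_diff[OF tendsto_0_mult_bounded(2)[where g="\<lambda>x. B x (\<not> k) l", OF A_lim B]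
          tendsto_0_mult_bounded(2)[where g="\<lambda>x. A x (\<not> k) l", OF B_lim A]] by simp
  qed
  have "((\<lambda>x. \<Sum>w\<in>UNIV. A x k w * B x w l - B x k w * A x w l) \<longlongrightarrow> (\<Sum>w\<in>(UNIV::bool set). 0)) F"
    by (rule tendsto_sum) (rule summand)
  then show ?thesis by (simp add: mat2_mult_def sum_subtractf)
qed

text \<open>\<open>rot_block a T n\<close> is the matrix of \<open>T\<^sub>n\<close> in the basis \<open>f\<^sub>a\<^sub>,\<^sub>2\<^sub>n, f\<^sub>a\<^sub>,\<^sub>2\<^sub>n\<^sub>+\<^sub>1\<close>, and
  \<open>rot_op a G\<close> is the operator in \<open>\<A>\<^sub>0\<close> whose blocks have the matrices \<open>G n\<close> in these bases;
  \<open>fvec a n k\<close> is \<open>f\<^sub>a\<^sub>,\<^sub>2\<^sub>n\<close> or \<open>f\<^sub>a\<^sub>,\<^sub>2\<^sub>n\<^sub>+\<^sub>1\<close>.\<close>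

definition rot_block :: "real \<Rightarrow> op \<Rightarrow> nat \<Rightarrow> mat2" where
  "rot_block a T n = rot_conj a (block T n)"

definition rot_op :: "real \<Rightarrow> (nat \<Rightarrow> mat2) \<Rightarrow> op" where
  "rot_op a G = block_op (\<lambda>n. rot_conj a (G n))"

definition fvec :: "real \<Rightarrow> nat \<Rightarrow> bool \<Rightarrow> nat \<Rightarrow> complex" where
  "fvec a n k = (\<lambda>j. if j div 2 = n then rot a k (odd j) else 0)"

lemma rot_block_rot_op [simp]: "\<bar>a\<bar> \<le> 1 \<Longrightarrow> rot_block a (rot_op a G) = G"
  by (simp add: fun_eq_iff rot_block_def rot_op_def rot_conj_rot_conj)

lemma A0_eq_rot_op: "\<bar>a\<bar> \<le> 1 \<Longrightarrow> T \<in> A0 \<Longrightarrow> T = rot_op a (rot_block a T)"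
  by (simp add: rot_op_def rot_block_def rot_conj_rot_conj A0_eq_block_op[symmetric])

lemma rot_op_A0_on:
  assumes a: "\<bar>a\<bar> \<le> 1" and G: "\<And>n k l. cmod (G n k l) \<le> K"
    and outside: "\<And>n. n \<notin> X \<Longrightarrow> G n = (\<lambda>k l. 0)"
  shows "rot_op a G \<in> A0_on X"
  unfolding rot_op_def
  by (rule block_op_A0_on[where K="4 * K"]) (use norm_rot_conj_le[OF a G] outside in auto)

lemma rot_op_A0:
  "\<bar>a\<bar> \<le> 1 \<Longrightarrow> (\<And>n k l. cmod (G n k l) \<le> K) \<Longrightarrow> rot_op a G \<in> A0"
  using rot_op_A0_on[of a G K UNIV] by (auto intro: A0_onD)

lemma rot_block_bounded:
  assumes "\<bar>a\<bar> \<le> 1" "T \<in> A0"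
  obtains K where "\<And>n k l. cmod (rot_block a T n k l) \<le> K"
proof -
  obtain K where "\<And>n u v. cmod (block T n u v) \<le> K" using A0_block_bounded[OF assms(2)] by blast
  then show ?thesis using that norm_rot_conj_le[OF assms(1)] unfolding rot_block_def by blast
qed

lemma op_add_rot_op: "op_add (rot_op a G) (rot_op a H) = rot_op a (\<lambda>n k l. G n k l + H n k l)"
  by (simp add: rot_op_def op_add_block_op rot_conj_add)

lemma rot_block_add: "rot_block a (op_add T S) n k l = rot_block a T n k l + rot_block a S n k l"
  by (simp add: rot_block_def block_add[abs_def] rot_conj_add)

lemma rot_block_sub: "rot_block a (op_sub T S) n k l = rot_block a T n k l - rot_block a S n k l"
  by (simp add: rot_block_def block_sub[abs_def] rot_conj_diff)

lemma rot_block_mult: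
  "\<bar>a\<bar> \<le> 1 \<Longrightarrow> T \<in> A0 \<Longrightarrow> S \<in> A0 \<Longrightarrow>
    rot_block a (op_mult T S) n = mat2_mult (rot_block a T n) (rot_block a S n)"
  by (simp add: rot_block_def block_mult rot_conj_mult)

lemma rot_block_adjoint_op: "rot_block a (adjoint_op T) n k l = cnj (rot_block a T n l k)"
  by (simp add: adjoint_op_def rot_block_def rot_conj_adjoint)

lemma fvec0_eq: "fvec0 a n = fvec a n False" and fvec1_eq: "fvec1 a n = fvec a n True"
proof -
  have "j div 2 = n \<longleftrightarrow> j = 2 * n \<or> j = 2 * n + 1" for j by auto
  then show "fvec0 a n = fvec a n False" "fvec1 a n = fvec a n True"
    by (auto simp: fun_eq_iff fvec0_def fvec1_def fvec_def vadd_def vsub_def vscale_def basis_vec_def rot_def)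
qed

lemma rot_op_fvec:
  assumes a: "\<bar>a\<bar> \<le> 1"
  shows "rot_op a G (fvec a n k) = (\<lambda>j. if j div 2 = n then (\<Sum>l\<in>UNIV. G n l k * rot a l (odd j)) else 0)"
proof -
  have "fvec a n k \<in> ell2" by (rule ell2_finite_support[of "2 * n + 2"]) (auto simp: fvec_def)
  moreover have "(\<Sum>v\<in>UNIV. rot_conj a M u v * rot a k v) = (\<Sum>l\<in>UNIV. M l k * rot a l u)" for M u
  proof -
    have "(\<Sum>v\<in>UNIV. rot_conj a M u v * rot a k v) = mat2_mult (rot_conj a M) (rot a) u k"
      by (simp add: mat2_mult_def rot_sym)
    also have "mat2_mult (rot_conj a M) (rot a) = mat2_mult (rot a) (mat2_mult M (mat2_mult (rot a) (rot a)))"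
      by (simp only: rot_conj_def mat2_mult_assoc)
    finally show ?thesis by (simp add: rot_mult_rot[OF a] mat2_mult_def rot_sym mult.commute)
  qed
  ultimately show ?thesis
    using block_index_div2 by (auto simp: fun_eq_iff rot_op_def block_op_def fvec_def)
qed

lemma rot_op_fvec_eigen:
  assumes a: "\<bar>a\<bar> \<le> 1" and diag: "G n (\<not> k) k = 0"
  shows "rot_op a G (fvec a n k) = vscale (G n k k) (fvec a n k)"
  unfolding rot_op_fvec[OF a] using diag
  by (cases k) (auto simp: fvec_def vscale_def fun_eq_iff sum_UNIV_bool)

lemma rot_op_fvec_eigen_offdiag:
  assumes a: "\<bar>a\<bar> \<le> 1" and eigen: "rot_op a G (fvec a n k) = vscale c (fvec a n k)" and "m \<noteq> k"
  shows "G n m k = 0"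
proof -
  have E: "(\<Sum>l\<in>UNIV. G n l k * rot a l u) = c * rot a k u" for u
    using fun_cong[OF eigen, of "2 * n + of_bool u"] unfolding rot_op_fvec[OF a]
    by (simp add: fvec_def vscale_def)
  have "G n m k = mat2_mult (rot a) (mat2_mult (rot a) (G n)) m k"
    by (simp only: mat2_mult_assoc[symmetric] rot_mult_rot[OF a] mat2_mult_id)
  also have "\<dots> = (\<Sum>u\<in>UNIV. rot a m u * (\<Sum>l\<in>UNIV. G n l k * rot a l u))"
    by (simp add: mat2_mult_def rot_sym mult_ac)
  also have "\<dots> = (\<Sum>u\<in>UNIV. rot a m u * (c * rot a k u))"
    by (simp only: E)
  also have "\<dots> = c * mat2_mult (rot a) (rot a) m k"
    by (simp add: mat2_mult_def sum_distrib_left rot_sym mult_ac)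
  also have "\<dots> = 0" using \<open>m \<noteq> k\<close> by (simp add: rot_mult_rot[OF a] mat2_id_def)
  finally show ?thesis .
qed

section \<open>The compressions \<open>P\<^sub>X T P\<^sub>X\<close>\<close>

text \<open>\<open>\<not> k\<close> indexes the other vector of the pair; \<open>inf sequentially (principal X)\<close> is the
  filter of \<open>n \<rightarrow> \<infinity>\<close> within \<open>X\<close>.\<close>

definition offdiag_vanishes :: "real \<Rightarrow> nat set \<Rightarrow> op \<Rightarrow> bool" where
  "offdiag_vanishes a X T \<longleftrightarrow>
     (\<forall>k. ((\<lambda>n. rot_block a T n k (\<not> k)) \<longlongrightarrow> 0) (inf sequentially (principal X)))"

lemma Dset_rot_block_offdiag:
  assumes a: "\<bar>a\<bar> \<le> 1" and D: "D \<in> Dset X a" and n: "n \<in> X"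
  shows "rot_block a D n (\<not> k) k = 0"
proof -
  have "D \<in> A0" using D by (simp add: Dset_def A0_on_def)
  then have D_eq: "D = rot_op a (rot_block a D)" by (rule A0_eq_rot_op[OF a])
  obtain c where "D (fvec a n k) = vscale c (fvec a n k)"
    using D n by (cases k) (auto simp: Dset_def fvec0_eq fvec1_eq)
  then have "rot_op a (rot_block a D) (fvec a n k) = vscale c (fvec a n k)" using D_eq by simp
  then show ?thesis by (rule rot_op_fvec_eigen_offdiag[OF a]) simp
qed

lemma rot_op_Dset:
  assumes a: "\<bar>a\<bar> \<le> 1" and G: "\<And>n k l. cmod (G n k l) \<le> K"
    and outside: "\<And>n. n \<notin> X \<Longrightarrow> G n = (\<lambda>k l. 0)" and diag: "\<And>n k. G n (\<not> k) k = 0"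
  shows "rot_op a G \<in> Dset X a"
proof -
  have "rot_op a G (fvec a n k) = vscale (G n k k) (fvec a n k)" for n k
    by (rule rot_op_fvec_eigen[of a G n k, OF a diag])
  moreover have "rot_op a G \<in> A0_on X" by (rule rot_op_A0_on[of a G K X, OF a G outside])
  ultimately show ?thesis unfolding Dset_def fvec0_eq fvec1_eq by blast
qed

lemma compact_rot_block_tendsto_0:
  assumes "R \<in> A0" and "compact_op R"
  shows "(\<lambda>n. rot_block a R n k l) \<longlonglongrightarrow> 0"
proof -
  have "\<forall>u v. (\<lambda>n. block R n u v) \<longlonglongrightarrow> 0"
    using assms compact_A0_iff_blocks_vanish unfolding blocks_vanish_def by blast
  then show ?thesis unfolding rot_block_def by (intro tendsto_rot_conj) simp
qed

lemma compact_rot_op: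
  assumes a: "\<bar>a\<bar> \<le> 1" and G: "\<And>n k l. cmod (G n k l) \<le> K" and lim: "\<And>k l. (\<lambda>n. G n k l) \<longlonglongrightarrow> 0"
  shows "compact_op (rot_op a G)"
proof -
  have "blocks_vanish (rot_op a G)"
    unfolding blocks_vanish_def rot_op_def block_block_op by (intro allI tendsto_rot_conj lim)
  moreover have "rot_op a G \<in> A0" by (rule rot_op_A0[of a G K, OF a G])
  ultimately show ?thesis by (simp add: compact_A0_iff_blocks_vanish)
qed

lemma compress_eq_rot_op:
  assumes a: "\<bar>a\<bar> \<le> 1" and T: "T \<in> A0"
  shows "op_mult (proj X) (op_mult T (proj X)) = rot_op a (\<lambda>n k l. if n \<in> X then rot_block a T n k l else 0)"
proof -
  have "rot_conj a (\<lambda>k l. if n \<in> X then rot_block a T n k l else 0) = (if n \<in> X then block T n else (\<lambda>u v. 0))"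
    for n
    by (cases "n \<in> X") (simp_all add: rot_block_def rot_conj_rot_conj[OF a])
  then show ?thesis unfolding compress_A0_eq_block_op[OF T] rot_op_def by presburger
qed

lemma compress_in_DKset_offdiag_vanishes:
  assumes a: "\<bar>a\<bar> \<le> 1" and T: "T \<in> A0" and DK: "op_mult (proj X) (op_mult T (proj X)) \<in> DKset X a"
  shows "offdiag_vanishes a X T"
  unfolding offdiag_vanishes_def
proof
  fix k
  obtain D R where PTP: "op_mult (proj X) (op_mult T (proj X)) = op_add D R" and D: "D \<in> Dset X a"
    and R: "compact_op R" "R \<in> A0_on X"
    using DK unfolding DKset_def by blast
  have "(\<lambda>n. rot_block a R n k (\<not> k)) \<longlonglongrightarrow> 0"
    using compact_rot_block_tendsto_0[OF A0_onD[OF R(2)] R(1)] .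
  then have R_lim: "((\<lambda>n. rot_block a R n k (\<not> k)) \<longlongrightarrow> 0) (inf sequentially (principal X))"
    by (rule tendsto_mono[OF inf_le1])
  have "rot_block a T n k l = rot_block a D n k l + rot_block a R n k l" if "n \<in> X" for n l
  proof -
    have "rot_block a T n k l = rot_block a (op_mult (proj X) (op_mult T (proj X))) n k l"
      using that by (simp add: compress_eq_rot_op[OF a T] a)
    then show ?thesis by (simp add: PTP rot_block_add)
  qed
  then have "\<forall>\<^sub>F n in inf sequentially (principal X). rot_block a R n k (\<not> k) = rot_block a T n k (\<not> k)"
    using Dset_rot_block_offdiag[OF a D, of _ "\<not> k"] by (auto simp: eventually_inf_principal)
  then show "((\<lambda>n. rot_block a T n k (\<not> k)) \<longlongrightarrow> 0) (inf sequentially (principal X))"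
    by (rule tendsto_cong[THEN iffD1, OF _ R_lim])
qed

text \<open>Split the rotated blocks of \<open>P\<^sub>X T P\<^sub>X\<close> into their diagonal part, which gives an element of
  \<open>\<D>(X, \<alpha>)\<close>, and their off-diagonal part, which gives a compact operator.\<close>

lemma offdiag_vanishes_compress_in_DKset:
  assumes a: "\<bar>a\<bar> \<le> 1" and T: "T \<in> A0" and vanish: "offdiag_vanishes a X T"
  shows "op_mult (proj X) (op_mult T (proj X)) \<in> DKset X a"
proof -
  let ?G = "\<lambda>n k l. if n \<in> X then rot_block a T n k l else 0"
  define Gd where "Gd n k l = (if k = l then ?G n k l else 0)" for n k l
  define Go where "Go n k l = (if k = l then 0 else ?G n k l)" for n k l
  obtain K where K: "\<And>n k l. cmod (rot_block a T n k l) \<le> K" using rot_block_bounded[OF a T] by blast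
  then have bounded: "cmod (Gd n k l) \<le> K" "cmod (Go n k l) \<le> K" for n k l
    using order_trans[OF norm_ge_zero K] by (auto simp: Gd_def Go_def)
  have "op_mult (proj X) (op_mult T (proj X)) = op_add (rot_op a Gd) (rot_op a Go)"
    unfolding compress_eq_rot_op[OF a T] op_add_rot_op
    by (rule arg_cong[where f="rot_op a"]) (auto simp: fun_eq_iff Gd_def Go_def)
  moreover have "rot_op a Gd \<in> Dset X a"
    by (rule rot_op_Dset[of a Gd K, OF a bounded(1)]) (auto simp: Gd_def fun_eq_iff)
  moreover have "rot_op a Go \<in> A0_on X"
    by (rule rot_op_A0_on[of a Go K, OF a bounded(2)]) (auto simp: Go_def fun_eq_iff)
  moreover have "(\<lambda>n. Go n k l) \<longlonglongrightarrow> 0" for k l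
  proof (cases "l = (\<not> k)")
    case True
    then show ?thesis
      using vanish unfolding offdiag_vanishes_def tendsto_0_along_iff[symmetric] by (simp add: Go_def)
  qed (simp add: Go_def)
  then have "compact_op (rot_op a Go)" by (rule compact_rot_op[OF a bounded(2)])
  ultimately show ?thesis unfolding DKset_def by blast
qed

lemma compress_in_DKset_iff:
  "\<bar>a\<bar> \<le> 1 \<Longrightarrow> T \<in> A0 \<Longrightarrow>
    op_mult (proj X) (op_mult T (proj X)) \<in> DKset X a \<longleftrightarrow> offdiag_vanishes a X T"
  using compress_in_DKset_offdiag_vanishes offdiag_vanishes_compress_in_DKset by blast

section \<open>The algebra of operators with vanishing off-diagonal coefficients\<close>

definition offdiag_algebra :: "nat set set \<Rightarrow> (nat set \<Rightarrow> real) \<Rightarrow> op set" where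
  "offdiag_algebra \<X> \<alpha> = {T \<in> A0. \<forall>X\<in>\<X>. offdiag_vanishes (\<alpha> X) X T}"

lemma Mset_eq_offdiag_algebra:
  assumes "\<And>X. X \<in> \<X> \<Longrightarrow> \<bar>\<alpha> X\<bar> \<le> 1"
  shows "Mset \<X> \<alpha> = offdiag_algebra \<X> \<alpha>"
proof -
  have "op_mult (proj X) (op_mult T (proj X)) \<in> DKset X (\<alpha> X) \<longleftrightarrow> offdiag_vanishes (\<alpha> X) X T"
    if "T \<in> A0" "X \<in> \<X>" for T X
    using compress_in_DKset_iff[OF assms[OF that(2)] that(1)] .
  then show ?thesis unfolding Mset_def offdiag_algebra_def by auto
qed

lemma offdiag_vanishes_zero: "offdiag_vanishes a X (\<lambda>x j. 0)"
proof -
  have "block (\<lambda>x j. 0) n = (\<lambda>u v. 0)" for n by (simp add: fun_eq_iff block_def entry_def)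
  then have "rot_block a (\<lambda>x j. 0) n = (\<lambda>k l. 0)" for n by (simp add: rot_block_def)
  then show ?thesis by (simp add: offdiag_vanishes_def)
qed

lemma offdiag_vanishes_add:
  assumes "offdiag_vanishes a X T" "offdiag_vanishes a X S"
  shows "offdiag_vanishes a X (op_add T S)"
  unfolding offdiag_vanishes_def rot_block_add
  using assms unfolding offdiag_vanishes_def by (intro allI tendsto_add_zero) auto

lemma offdiag_vanishes_scale: "offdiag_vanishes a X T \<Longrightarrow> offdiag_vanishes a X (op_scale c T)"
  by (simp add: offdiag_vanishes_def rot_block_def block_scale[abs_def] rot_conj_scale
      tendsto_mult_right_zero)

lemma offdiag_vanishes_adjoint:
  assumes "offdiag_vanishes a X T"
  shows "offdiag_vanishes a X (adjoint_op T)"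
  unfolding offdiag_vanishes_def rot_block_adjoint_op
proof
  fix k
  show "((\<lambda>n. cnj (rot_block a T n (\<not> k) k)) \<longlongrightarrow> 0) (inf sequentially (principal X))"
    using tendsto_cnj[OF spec[OF assms[unfolded offdiag_vanishes_def], of "\<not> k"]] by simp
qed

lemma offdiag_vanishes_mult:
  assumes a: "\<bar>a\<bar> \<le> 1"
    and T: "T \<in> A0" "offdiag_vanishes a X T" and S: "S \<in> A0" "offdiag_vanishes a X S"
  shows "offdiag_vanishes a X (op_mult T S)"
  unfolding offdiag_vanishes_def
proof
  fix k
  let ?F = "inf sequentially (principal X)"
  obtain K1 where K1: "\<And>n k l. cmod (rot_block a T n k l) \<le> K1" using rot_block_bounded[OF a T(1)] by blast
  obtain K2 where K2: "\<And>n k l. cmod (rot_block a S n k l) \<le> K2" using rot_block_bounded[OF a S(1)] by blast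
  have T_lim: "((\<lambda>n. rot_block a T n k (\<not> k)) \<longlongrightarrow> 0) ?F"
    and S_lim: "((\<lambda>n. rot_block a S n k (\<not> k)) \<longlongrightarrow> 0) ?F"
    using T(2) S(2) unfolding offdiag_vanishes_def by blast+
  have "((\<lambda>n. rot_block a T n k k * rot_block a S n k (\<not> k)) \<longlongrightarrow> 0) ?F"
    by (rule tendsto_0_mult_bounded(1)[where g="\<lambda>n. rot_block a T n k k", OF S_lim K1])
  moreover have "((\<lambda>n. rot_block a T n k (\<not> k) * rot_block a S n (\<not> k) (\<not> k)) \<longlongrightarrow> 0) ?F"
    by (rule tendsto_0_mult_bounded(2)[where g="\<lambda>n. rot_block a S n (\<not> k) (\<not> k)", OF T_lim K2])
  ultimately have "((\<lambda>n. rot_block a T n k k * rot_block a S n k (\<not> k)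
      + rot_block a T n k (\<not> k) * rot_block a S n (\<not> k) (\<not> k)) \<longlongrightarrow> 0) ?F"
    by (rule tendsto_add_zero)
  then show "((\<lambda>n. rot_block a (op_mult T S) n k (\<not> k)) \<longlongrightarrow> 0) ?F"
    by (simp add: rot_block_mult[OF a T(1) S(1)] mat2_mult_def sum_UNIV_bool_split[of _ k])
qed

lemma offdiag_vanishes_limit:
  assumes a: "\<bar>a\<bar> \<le> 1" and T: "\<And>p. T p \<in> A0" "\<And>p. offdiag_vanishes a X (T p)"
    and S: "S \<in> Bop"
    and lim: "(\<lambda>p. opnorm (op_sub (T p) S)) \<longlonglongrightarrow> 0"
  shows "offdiag_vanishes a X S"
  unfolding offdiag_vanishes_def
proof
  fix k
  have "cmod (rot_block a S n k l - rot_block a (T p) n k l) \<le> 4 * opnorm (op_sub (T p) S)" for p n l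
  proof -
    have "cmod (block (T p) n u v - block S n u v) \<le> opnorm (op_sub (T p) S)" for u v
      unfolding block_def by (rule norm_entry_diff_le_opnorm[OF A0_Bop[OF T(1)] S])
    then have "cmod (rot_conj a (\<lambda>u v. block (T p) n u v - block S n u v) k l) \<le> 4 * opnorm (op_sub (T p) S)"
      by (rule norm_rot_conj_le[OF a])
    then show ?thesis by (simp add: rot_conj_diff rot_block_def norm_minus_commute)
  qed
  note approx = this
  show "((\<lambda>n. rot_block a S n k (\<not> k)) \<longlongrightarrow> 0) (inf sequentially (principal X))"
  proof (rule tendsto_0_uniform_approx[where B="\<lambda>p. 4 * opnorm (op_sub (T p) S)"
        and f="\<lambda>p n. rot_block a (T p) n k (\<not> k)"])
    show "((\<lambda>n. rot_block a (T p) n k (\<not> k)) \<longlongrightarrow> 0) (inf sequentially (principal X))" for p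
      using T(2) unfolding offdiag_vanishes_def by blast
    show "(\<lambda>p. 4 * opnorm (op_sub (T p) S)) \<longlonglongrightarrow> 0"
      using tendsto_mult_right_zero[OF lim] .
  qed (rule approx)
qed

lemma offdiag_algebraI:
  "T \<in> A0 \<Longrightarrow> (\<And>X. X \<in> \<X> \<Longrightarrow> offdiag_vanishes (\<alpha> X) X T) \<Longrightarrow>
    T \<in> offdiag_algebra \<X> \<alpha>"
  by (simp add: offdiag_algebra_def)

lemma offdiag_algebraD:
  assumes "T \<in> offdiag_algebra \<X> \<alpha>"
  shows "T \<in> A0" and "X \<in> \<X> \<Longrightarrow> offdiag_vanishes (\<alpha> X) X T"
  using assms by (simp_all add: offdiag_algebra_def)

lemma cstar_subalg_offdiag_algebra:
  assumes a: "\<And>X. X \<in> \<X> \<Longrightarrow> \<bar>\<alpha> X\<bar> \<le> 1"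
  shows "cstar_subalg (offdiag_algebra \<X> \<alpha>)"
  unfolding cstar_subalg_def
proof (intro conjI ballI allI impI)
  let ?M = "offdiag_algebra \<X> \<alpha>"
  show "?M \<subseteq> Bop" by (auto simp: offdiag_algebra_def A0_Bop)
  show "(\<lambda>x j. 0) \<in> ?M"
    using block_op_A0[of "\<lambda>n u v. 0" 0] offdiag_vanishes_zero
    by (intro offdiag_algebraI) (simp_all add: block_op_zero)
  fix S T assume S: "S \<in> ?M" and T: "T \<in> ?M"
  note SA = offdiag_algebraD(1)[OF S] and TA = offdiag_algebraD(1)[OF T]
  show "op_add S T \<in> ?M"
    by (intro offdiag_algebraI A0_closed(1)[OF SA TA] offdiag_vanishes_add
        offdiag_algebraD(2)[OF S] offdiag_algebraD(2)[OF T])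
  show "op_mult S T \<in> ?M"
    by (intro offdiag_algebraI A0_closed(4)[OF SA TA] offdiag_vanishes_mult[OF a] SA TA
        offdiag_algebraD(2)[OF S] offdiag_algebraD(2)[OF T])
next
  let ?M = "offdiag_algebra \<X> \<alpha>"
  fix c T assume T: "T \<in> ?M"
  show "op_scale c T \<in> ?M"
    by (intro offdiag_algebraI A0_closed(3)[OF offdiag_algebraD(1)[OF T] offdiag_algebraD(1)[OF T]]
        offdiag_vanishes_scale offdiag_algebraD(2)[OF T])
next
  let ?M = "offdiag_algebra \<X> \<alpha>"
  fix T assume T: "T \<in> ?M"
  note TA = offdiag_algebraD(1)[OF T]
  have "adjoint_op T \<in> ?M"
    by (intro offdiag_algebraI adjoint_op_A0[OF TA] offdiag_vanishes_adjoint offdiag_algebraD(2)[OF T])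
  then show "\<exists>S\<in>?M. is_adjoint T S" using is_adjoint_adjoint_op[OF TA] by blast
next
  let ?M = "offdiag_algebra \<X> \<alpha>"
  fix T S assume "(\<forall>n. T n \<in> ?M) \<and> S \<in> Bop \<and> (\<lambda>n. opnorm (op_sub (T n) S)) \<longlonglongrightarrow> 0"
  then have T: "\<And>p. T p \<in> ?M" and S: "S \<in> Bop" and lim: "(\<lambda>p. opnorm (op_sub (T p) S)) \<longlonglongrightarrow> 0"
    by auto
  have "offdiag_vanishes (\<alpha> X) X S" if X: "X \<in> \<X>" for X
    by (rule offdiag_vanishes_limit[OF a[OF X] offdiag_algebraD(1)[OF T] offdiag_algebraD(2)[OF T X] S lim])
  then show "S \<in> ?M" by (intro offdiag_algebraI A0_limit[OF offdiag_algebraD(1)[OF T] S lim])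
qed

lemma commutator_rot_block_tendsto_0:
  assumes a: "\<bar>a\<bar> \<le> 1" and T: "T \<in> A0" "offdiag_vanishes a X T" and S: "S \<in> A0" "offdiag_vanishes a X S"
  shows "((\<lambda>n. rot_block a (op_sub (op_mult T S) (op_mult S T)) n k l) \<longlongrightarrow> 0) (inf sequentially (principal X))"
proof -
  obtain K1 where K1: "\<And>n k l. cmod (rot_block a T n k l) \<le> K1" using rot_block_bounded[OF a T(1)] by blast
  obtain K2 where K2: "\<And>n k l. cmod (rot_block a S n k l) \<le> K2" using rot_block_bounded[OF a S(1)] by blast
  have "((\<lambda>n. mat2_mult (rot_block a T n) (rot_block a S n) k l - mat2_mult (rot_block a S n) (rot_block a T n) k l)
      \<longlongrightarrow> 0) (inf sequentially (principal X))"
    using T(2) S(2) unfolding offdiag_vanishes_def by (intro mat2_commutator_tendsto_0[OF K1 K2]) auto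
  then show ?thesis by (simp add: rot_block_sub rot_block_mult[OF a T(1) S(1)] rot_block_mult[OF a S(1) T(1)])
qed

lemma offdiag_algebra_almost_commute:
  assumes wide: "wide \<X>" and a: "\<And>X. X \<in> \<X> \<Longrightarrow> \<bar>\<alpha> X\<bar> \<le> 1"
    and T: "T \<in> offdiag_algebra \<X> \<alpha>" and S: "S \<in> offdiag_algebra \<X> \<alpha>"
  shows "almost_commute T S"
proof -
  let ?C = "op_sub (op_mult T S) (op_mult S T)"
  note TA = offdiag_algebraD(1)[OF T] and SA = offdiag_algebraD(1)[OF S]
  have CA: "?C \<in> A0" using A0_closed[OF TA SA] A0_closed[OF SA TA] by (intro A0_closed(2))
  have "(\<lambda>n. block ?C n u v) \<longlonglongrightarrow> 0" for u v
  proof (rule wide_tendsto_0[OF wide])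
    fix X assume X: "X \<in> \<X>"
    have "((\<lambda>n. rot_conj (\<alpha> X) (rot_block (\<alpha> X) ?C n) u v) \<longlongrightarrow> 0) (inf sequentially (principal X))"
      by (intro tendsto_rot_conj commutator_rot_block_tendsto_0[OF a[OF X] TA _ SA]
          offdiag_algebraD(2)[OF T X] offdiag_algebraD(2)[OF S X])
    then show "((\<lambda>n. block ?C n u v) \<longlongrightarrow> 0) (inf sequentially (principal X))"
      by (simp add: rot_block_def rot_conj_rot_conj[OF a[OF X]])
  qed
  then show ?thesis
    unfolding almost_commute_def compact_A0_iff_blocks_vanish[OF CA] blocks_vanish_def by blast
qed

text \<open>The projection \<open>Q\<^sub>X\<close> onto the closed span of the \<open>f\<^sub>\<alpha>\<^sub>,\<^sub>2\<^sub>n\<close>, \<open>n \<in> X\<close>.\<close>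

definition fproj :: "real \<Rightarrow> nat set \<Rightarrow> op" where
  "fproj a X = rot_op a (\<lambda>n k l. of_bool (n \<in> X \<and> \<not> k \<and> \<not> l))"

lemma fproj_in_offdiag_algebra:
  assumes coh: "coherent \<X> \<alpha>" and X: "X \<in> \<X>"
  shows "fproj (\<alpha> X) X \<in> offdiag_algebra \<X> \<alpha>"
proof (rule offdiag_algebraI)
  have a: "\<bar>\<alpha> Y\<bar> \<le> 1" if "Y \<in> \<X>" for Y using coh that by (auto simp: coherent_def)
  show "fproj (\<alpha> X) X \<in> A0"
    unfolding fproj_def by (rule rot_op_A0[OF a[OF X], where K=1]) simp
  fix Y assume Y: "Y \<in> \<X>"
  show "offdiag_vanishes (\<alpha> Y) Y (fproj (\<alpha> X) X)"
  proof (cases "finite (X \<inter> Y)")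
    case True
    have "block (fproj (\<alpha> X) X) n = (\<lambda>u v. 0)" if "n \<notin> X" for n
      using that by (simp add: fproj_def rot_op_def)
    then have zero: "rot_block (\<alpha> Y) (fproj (\<alpha> X) X) n k (\<not> k) = 0" if "n \<notin> X" for n k
      using that by (simp add: rot_block_def)
    have "{n. \<not> (n \<in> Y \<longrightarrow> n \<notin> X)} = X \<inter> Y" by auto
    then have "\<forall>\<^sub>F n in sequentially. n \<in> Y \<longrightarrow> n \<notin> X"
      using True by (simp only: eventually_sequentially_iff_finite)
    then have "\<forall>\<^sub>F n in inf sequentially (principal Y). rot_block (\<alpha> Y) (fproj (\<alpha> X) X) n k (\<not> k) = 0"
      for k
      unfolding eventually_inf_principal by (rule eventually_mono) (simp add: zero)
    then show ?thesis unfolding offdiag_vanishes_def by (simp add: tendsto_eventually)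
  next
    case False
    then have "\<alpha> Y = \<alpha> X" using coh X Y by (auto simp: coherent_def)
    then show ?thesis
      unfolding offdiag_vanishes_def fproj_def by (simp add: rot_block_rot_op[OF a[OF X]])
  qed
qed

lemma almost_commute_fproj:
  assumes a: "\<bar>a\<bar> \<le> 1" and T: "T \<in> A0" and commute: "almost_commute T (fproj a X)"
  shows "offdiag_vanishes a X T"
  unfolding offdiag_vanishes_def
proof
  fix k
  let ?Q = "fproj a X" and ?C = "op_sub (op_mult T (fproj a X)) (op_mult (fproj a X) T)"
  have QA: "?Q \<in> A0" unfolding fproj_def by (rule rot_op_A0[OF a, where K=1]) simp
  have CA: "?C \<in> A0" using A0_closed[OF T QA] A0_closed[OF QA T] by (intro A0_closed(2))
  have "(\<lambda>n. rot_block a ?C n k (\<not> k)) \<longlonglongrightarrow> 0"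
    using compact_rot_block_tendsto_0[OF CA commute[unfolded almost_commute_def]] .
  then have lim: "((\<lambda>n. (if k then 1 else -1) * rot_block a ?C n k (\<not> k)) \<longlongrightarrow> 0)
      (inf sequentially (principal X))"
    by (intro tendsto_mult_right_zero tendsto_mono[OF inf_le1])
  have "(if k then 1 else -1) * rot_block a ?C n k (\<not> k) = rot_block a T n k (\<not> k)"
    if "n \<in> X" for n
    using that unfolding rot_block_sub rot_block_mult[OF a T QA] rot_block_mult[OF a QA T]
    by (cases k) (simp_all add: fproj_def rot_block_rot_op[OF a] mat2_mult_def sum_UNIV_bool)
  then have "\<forall>\<^sub>F n in inf sequentially (principal X).
      (if k then 1 else -1) * rot_block a ?C n k (\<not> k) = rot_block a T n k (\<not> k)"
    unfolding eventually_inf_principal by (simp add: always_eventually)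
  then show "((\<lambda>n. rot_block a T n k (\<not> k)) \<longlongrightarrow> 0) (inf sequentially (principal X))"
    by (rule tendsto_cong[THEN iffD1, OF _ lim])
qed

lemma offdiag_algebra_maximal:
  assumes coh: "coherent \<X> \<alpha>" and N: "N \<subseteq> A0" "\<forall>S\<in>N. \<forall>T\<in>N. almost_commute S T"
    and M: "offdiag_algebra \<X> \<alpha> \<subseteq> N"
  shows "N \<subseteq> offdiag_algebra \<X> \<alpha>"
proof
  fix T assume T: "T \<in> N"
  show "T \<in> offdiag_algebra \<X> \<alpha>"
  proof (rule offdiag_algebraI)
    show TA: "T \<in> A0" using T N(1) by blast
    fix X assume X: "X \<in> \<X>"
    have "fproj (\<alpha> X) X \<in> N" using M fproj_in_offdiag_algebra[OF coh X] by blast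
    then have "almost_commute T (fproj (\<alpha> X) X)" using N(2) T by blast
    moreover have "\<bar>\<alpha> X\<bar> \<le> 1" using coh X by (auto simp: coherent_def)
    ultimately show "offdiag_vanishes (\<alpha> X) X T" using almost_commute_fproj TA by blast
  qed
qed

theorem lemma4p16:
  fixes \<X> :: "nat set set" and \<alpha> :: "nat set \<Rightarrow> real"
  assumes "wide \<X>" and "coherent \<X> \<alpha>"
  shows "almost_masa A0 (Mset \<X> \<alpha>)"
proof -
  have a: "\<bar>\<alpha> X\<bar> \<le> 1" if "X \<in> \<X>" for X using assms(2) that by (auto simp: coherent_def)
  let ?M = "offdiag_algebra \<X> \<alpha>"
  have cstar: "cstar_subalg ?M" by (rule cstar_subalg_offdiag_algebra[of \<X> \<alpha>, OF a])
  have sub: "?M \<subseteq> A0" using offdiag_algebraD(1) by blast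
  have comm: "\<forall>S\<in>?M. \<forall>T\<in>?M. almost_commute S T"
    using offdiag_algebra_almost_commute[of \<X> \<alpha>, OF assms(1) a] by blast
  have max: "\<forall>N. cstar_subalg N \<and> N \<subseteq> A0 \<and> (\<forall>S\<in>N. \<forall>T\<in>N. almost_commute S T) \<and> ?M \<subseteq> N
      \<longrightarrow> N = ?M"
    using offdiag_algebra_maximal[OF assms(2)] by (blast intro: subset_antisym)
  have "Mset \<X> \<alpha> = ?M" by (rule Mset_eq_offdiag_algebra) (rule a)
  then show ?thesis unfolding almost_masa_def by (simp only:) (intro conjI cstar sub comm max)
qed

end
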